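(* Let $a,b,c$ be real numbers with $|1-c|<1$, $|c-a-b|<1$, $|b-a|<1$. Let $\underline{u}_0,\underline{u}_1$ be linearly independent solutions of $\underline{u}''-q(x)\underline{u}=0$ on $X_+=\{x\in\mathbf{C}\setminus\{0,1\}\mid \operatorname{Im}x\ge 0\}$, and set $S=\underline{u}_1/\underline{u}_0$ and $DS=\underline{u}_1'/\underline{u}_0'$ (maps $X_+\to\mathbf{P}^1$). Then \[ S(0)=DS(0),\qquad S(1)=DS(1),\qquad S(\infty)=DS(\infty), \] where the values at $0,1,\infty$ are the limits as $x$ tends to these points within $X_+$.
   Context: The hypergeometric equation is $x(1-x)u''+\{c-(a+b+1)x\}u'-abu=0$. Its exponent differences are $\mu_0=1-c$, $\mu_1=c-a-b$, $\mu_\infty=b-a$. Putting $\underline{u}=N u$ with $N=\sqrt{x^c(1-x)^{a+b+1-c}}$ transforms it into the SL-form $\underline{u}''-q\underline{u}=0$ with \[ q=-\frac14\,\frac{(1-\mu_\infty^2)x^2+(\mu_\infty^2+\mu_0^2-\mu_1^2-1)x+1-\mu_0^2}{x^2(1-x)^2}. \] $S$ is the Schwarz map and $DS$ the derived Schwarz map; $\mathbf{P}^1=\mathbf{C}\cup\{\infty\}$. *)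

theory Defs
  imports "HOL-Analysis.Analysis"
begin

text \<open>Exponent differences of the hypergeometric equation.\<close>
definition mu0 :: "real \<Rightarrow> real \<Rightarrow> real \<Rightarrow> real" where
  "mu0 a b c = 1 - c"
definition mu1 :: "real \<Rightarrow> real \<Rightarrow> real \<Rightarrow> real" where
  "mu1 a b c = c - a - b"
definition muinf :: "real \<Rightarrow> real \<Rightarrow> real \<Rightarrow> real" where
  "muinf a b c = b - a"

definition qpot :: "real \<Rightarrow> real \<Rightarrow> real \<Rightarrow> complex \<Rightarrow> complex" where
  "qpot a b c x =
     - (1/4) * ((1 - complex_of_real ((muinf a b c)^2)) * x^2
        + complex_of_real ((muinf a b c)^2 + (mu0 a b c)^2 - (mu1 a b c)^2 - 1) * x
        + (1 - complex_of_real ((mu0 a b c)^2)))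
       / (x^2 * (1 - x)^2)"

definition Xplus :: "complex set" where
  "Xplus = {x. x \<noteq> 0 \<and> x \<noteq> 1 \<and> Im x \<ge> 0}"

definition sl_solution :: "real \<Rightarrow> real \<Rightarrow> real \<Rightarrow> (complex \<Rightarrow> complex) \<Rightarrow> bool" where
  "sl_solution a b c u \<longleftrightarrow>
     (\<exists>U. open U \<and> Xplus \<subseteq> U \<and> 0 \<notin> U \<and> 1 \<notin> U \<and> u holomorphic_on U \<and>
          (\<forall>x\<in>U. deriv (deriv u) x - qpot a b c x * u x = 0))"

text \<open>Points of P^1 in homogeneous coordinates (z0, z1) (nonzero), the
  point [z0:z1] corresponding to the affine value z1/z0 (infinity if z0 = 0).
  Chordal (Fubini-Study) distance on P^1.\<close>
definition chordal :: "complex \<times> complex \<Rightarrow> complex \<times> complex \<Rightarrow> real" where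
  "chordal p r = cmod (fst p * snd r - snd p * fst r)
     / (sqrt ((cmod (fst p))^2 + (cmod (snd p))^2) * sqrt ((cmod (fst r))^2 + (cmod (snd r))^2))"

definition P1_tendsto :: "('a \<Rightarrow> complex \<times> complex) \<Rightarrow> complex \<times> complex \<Rightarrow> 'a filter \<Rightarrow> bool" where
  "P1_tendsto f p F \<longleftrightarrow> p \<noteq> (0, 0) \<and> ((\<lambda>x. chordal (f x) p) \<longlongrightarrow> 0) F"

end

theory Submission
  imports Defs "HOL-Complex_Analysis.Complex_Analysis"
begin

text \<open>Near each of 0, 1 and \<infinity>, a change of variable (t = -x, t = 1 - x, and t = 1/x together
  with u \<mapsto> t u(1/t)) turns the equation into v'' = A(t)/t^2 v with A holomorphic at 0 and
  A(0) = -(1 - \<mu>^2)/4. The indicial roots are (1 + |\<mu>|)/2 > \<kappa> = (1 - |\<mu>|)/2, and the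
  Frobenius method gives a fundamental system whose dominant member f behaves like t^\<kappa>
  (like t^(1/2) log t if \<mu> = 0), with t f' \<sim> \<kappa> f, while the other one is negligible against f.
  Hence a solution with coefficient p along f satisfies v/f \<rightarrow> p and t v'/f \<rightarrow> \<kappa> p. By independence
  of u0 and u1 the coefficients (p0, p1) are not both zero, so [v0 : v1] and [v0' : v1'] both tend
  to [p0 : p1]. This needs \<kappa> \<noteq> 0, and at \<infinity>, where u' = v - t v', also \<kappa> \<noteq> 1; both follow
  from |\<mu>| < 1.\<close>

section \<open>Frobenius series\<close>

text \<open>Coefficients of the power series h with h(0) = 1 and t h'' + 2 \<rho> h' = B h, where B has
  coefficients b: comparing coefficients of t^(n-1) gives n (n - 1 + 2 \<rho>) h_n = (B h)_(n-1).\<close>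
fun frobenius_coeff :: "(nat \<Rightarrow> complex) \<Rightarrow> real \<Rightarrow> nat \<Rightarrow> complex" where
  "frobenius_coeff b \<rho> n =
     (if n = 0 then 1
      else (\<Sum>k<n. b (n - 1 - k) * frobenius_coeff b \<rho> k) / (of_nat n * (of_nat n - 1 + 2 * of_real \<rho>)))"

declare frobenius_coeff.simps[simp del]

lemma frobenius_denominator_ge:
  assumes "\<rho> > 0" "n \<ge> 1"
  shows "2 * \<rho> \<le> norm (of_nat n * (of_nat n - 1 + 2 * of_real \<rho>) :: complex)"
proof -
  have "1 * (2 * \<rho>) \<le> real n * (real n - 1 + 2 * \<rho>)"
    using assms by (intro mult_mono) auto
  moreover have "(of_nat n * (of_nat n - 1 + 2 * of_real \<rho>) :: complex) = of_real (real n * (real n - 1 + 2 * \<rho>))"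
    by simp
  ultimately show ?thesis
    using assms(1) by (simp del: of_real_mult of_real_add of_real_diff)
qed

lemma norm_frobenius_coeff_le:
  fixes b :: "nat \<Rightarrow> complex" and \<rho> K L :: real
  assumes \<rho>: "\<rho> > 0" and K: "K \<ge> 0" and L: "L \<ge> 1" and KL: "K \<le> \<rho> * L"
    and b: "\<And>j. norm (b j) \<le> K * (L / 2) ^ j"
  shows "norm (frobenius_coeff b \<rho> n) \<le> L ^ n"
proof (induction n rule: less_induct)
  case (less n)
  show ?case
  proof (cases n)
    case 0
    then show ?thesis by (simp add: frobenius_coeff.simps)
  next
    case (Suc m)
    have "norm (\<Sum>k<n. b (n - 1 - k) * frobenius_coeff b \<rho> k)
        \<le> (\<Sum>k<n. norm (b (n - 1 - k) * frobenius_coeff b \<rho> k))"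
      by (rule norm_sum)
    also have "\<dots> = (\<Sum>k<n. norm (b (m - k)) * norm (frobenius_coeff b \<rho> k))"
      by (simp add: Suc norm_mult)
    also have "\<dots> \<le> (\<Sum>k<n. K * L ^ m * (1/2) ^ (m - k))"
    proof (rule sum_mono)
      fix k assume k: "k \<in> {..<n}"
      have "norm (b (m - k)) * norm (frobenius_coeff b \<rho> k) \<le> K * (L / 2) ^ (m - k) * L ^ k"
        using k K L by (intro mult_mono b less.IH) (auto simp: Suc)
      also have "\<dots> = K * L ^ m * (1/2) ^ (m - k)"
        using k by (simp add: Suc power_add[symmetric] field_simps)
      finally show "norm (b (m - k)) * norm (frobenius_coeff b \<rho> k) \<le> K * L ^ m * (1/2) ^ (m - k)" .
    qed
    also have "\<dots> = K * L ^ m * (\<Sum>k<n. (1/2::real) ^ k)"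
      using sum.nat_diff_reindex[of "\<lambda>k. (1/2::real) ^ k" n] by (simp add: Suc sum_distrib_left[symmetric])
    also have "\<dots> \<le> K * L ^ m * 2"
      using K L by (intro mult_left_mono) (simp_all add: sum_gp_strict)
    finally have sum_le: "norm (\<Sum>k<n. b (n - 1 - k) * frobenius_coeff b \<rho> k) \<le> 2 * K * L ^ m"
      by simp
    have "norm (frobenius_coeff b \<rho> n)
        = norm (\<Sum>k<n. b (n - 1 - k) * frobenius_coeff b \<rho> k)
          / norm (of_nat n * (of_nat n - 1 + 2 * of_real \<rho>) :: complex)"
      by (subst frobenius_coeff.simps) (simp add: Suc norm_divide)
    also have "\<dots> \<le> (2 * K * L ^ m) / (2 * \<rho>)"
      using sum_le frobenius_denominator_ge[OF \<rho>, of n] \<rho> K L Suc by (intro frac_le) auto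
    also have "\<dots> \<le> L * L ^ m"
      using KL \<rho> L by (simp add: field_simps mult_right_mono)
    finally show ?thesis by (simp add: Suc)
  qed
qed

lemma frobenius_coeff_fps_equation:
  fixes F :: "complex fps" and \<rho> :: real
  assumes "\<rho> > 0"
  defines "H \<equiv> Abs_fps (frobenius_coeff (fps_nth F) \<rho>)"
  shows "fps_X * fps_deriv (fps_deriv H) + fps_const (of_real (2 * \<rho>)) * fps_deriv H = H * F"
proof (rule fps_ext)
  fix n
  let ?h = "frobenius_coeff (fps_nth F) \<rho>"
  have nonzero: "(of_nat (Suc n) * (of_nat (Suc n) - 1 + 2 * of_real \<rho>) :: complex) \<noteq> 0"
    using frobenius_denominator_ge[OF assms(1), of "Suc n"] assms(1) by auto
  have "fps_nth (fps_X * fps_deriv (fps_deriv H) + fps_const (of_real (2 * \<rho>)) * fps_deriv H) n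
      = of_nat (Suc n) * (of_nat (Suc n) - 1 + 2 * of_real \<rho>) * ?h (Suc n)"
    by (cases n) (simp_all add: H_def algebra_simps)
  also have "\<dots> = (\<Sum>k<Suc n. fps_nth F (n - k) * ?h k)"
    using nonzero by (subst frobenius_coeff.simps) (simp add: field_simps)
  also have "\<dots> = (\<Sum>k\<le>n. ?h k * fps_nth F (n - k))"
    unfolding lessThan_Suc_atMost by (intro sum.cong refl) (simp add: mult.commute)
  also have "\<dots> = fps_nth (H * F) n"
    by (simp add: fps_mult_nth H_def atLeast0AtMost)
  finally show "fps_nth (fps_X * fps_deriv (fps_deriv H) + fps_const (of_real (2 * \<rho>)) * fps_deriv H) n
      = fps_nth (H * F) n" .
qed

lemma fps_coeff_bound_of_conv_radius:
  fixes F :: "complex fps"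
  assumes "ereal R \<le> fps_conv_radius F" "R > 0"
  obtains K where "K > 0" "\<And>n. norm (fps_nth F n) \<le> K * (2 / R) ^ n"
proof -
  have "ereal (norm (of_real (R / 2) :: complex)) < fps_conv_radius F"
    using assms by (simp add: less_le_trans[of _ "ereal R"])
  then have "summable (\<lambda>n. fps_nth F n * of_real (R / 2) ^ n)"
    by (rule summable_fps)
  then have "Bseq (\<lambda>n. fps_nth F n * of_real (R / 2) ^ n)"
    by (intro convergent_imp_Bseq) (auto intro: convergentI summable_LIMSEQ_zero)
  then obtain K where K: "K > 0" "\<And>n. norm (fps_nth F n * of_real (R / 2) ^ n) \<le> K"
    by (auto elim: BseqE)
  show ?thesis
  proof (rule that[OF K(1)])
    fix n
    have "norm (fps_nth F n) * (R / 2) ^ n \<le> K"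
      using K(2)[of n] assms(2) by (simp add: norm_mult norm_power)
    then show "norm (fps_nth F n) \<le> K * (2 / R) ^ n"
      using assms(2) by (simp add: field_simps)
  qed
qed

lemma fps_conv_radius_ge_of_coeff_bound:
  fixes H :: "complex fps"
  assumes "L > 0" "\<And>n. norm (fps_nth H n) \<le> L ^ n"
  shows "ereal (1 / L) \<le> fps_conv_radius H"
  unfolding fps_conv_radius_def
proof (rule conv_radius_geI_ex')
  fix r :: real assume r: "0 < r" "ereal r < ereal (1 / L)"
  then have "summable (\<lambda>n. (r * L) ^ n)"
    using assms(1) by (intro summable_geometric) (simp add: field_simps)
  moreover have "norm (fps_nth H n * of_real r ^ n) \<le> (r * L) ^ n" for n
    using r assms by (simp add: norm_mult norm_power power_mult_distrib mult.commute mult_right_mono)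
  ultimately show "summable (\<lambda>n. fps_nth H n * of_real r ^ n)"
    by (rule summable_comparison_test'[where N = 0])
qed

lemma frobenius_fps_conv_radius:
  fixes F :: "complex fps" and R \<rho> :: real
  assumes F: "ereal R \<le> fps_conv_radius F" and R: "R > 0" and \<rho>: "\<rho> > 0"
  obtains r where "0 < r" "r \<le> R" "ereal r \<le> fps_conv_radius (Abs_fps (frobenius_coeff (fps_nth F) \<rho>))"
proof -
  obtain K where K: "K > 0" "\<And>n. norm (fps_nth F n) \<le> K * (2 / R) ^ n"
    using fps_coeff_bound_of_conv_radius[OF F R] by blast
  define L where "L = max (max (4 / R) (K / \<rho>)) 1"
  have L: "L \<ge> 1" "4 / R \<le> L" "K \<le> \<rho> * L"
  proof -
    show "L \<ge> 1" "4 / R \<le> L" by (auto simp: L_def)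
    have "K / \<rho> \<le> L" by (simp add: L_def)
    then show "K \<le> \<rho> * L" using \<rho> by (simp add: field_simps)
  qed
  have "norm (fps_nth F j) \<le> K * (L / 2) ^ j" for j
  proof -
    have "(2 / R) ^ j \<le> (L / 2) ^ j"
      using L(2) R by (intro power_mono) (auto simp: field_simps)
    then show ?thesis
      using K by (meson mult_left_mono less_imp_le order_trans)
  qed
  then have "norm (frobenius_coeff (fps_nth F) \<rho> n) \<le> L ^ n" for n
    using norm_frobenius_coeff_le[OF \<rho> _ L(1,3)] K(1) by simp
  then have "ereal (1 / L) \<le> fps_conv_radius (Abs_fps (frobenius_coeff (fps_nth F) \<rho>))"
    using L(1) by (intro fps_conv_radius_ge_of_coeff_bound) auto
  moreover have "0 < 1 / L" "1 / L \<le> R"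
    using L R by (auto simp: field_simps)
  ultimately show ?thesis
    using that by blast
qed

lemma eval_frobenius_fps_equation:
  fixes F :: "complex fps" and \<rho> :: real
  defines "H \<equiv> Abs_fps (frobenius_coeff (fps_nth F) \<rho>)"
  assumes \<rho>: "\<rho> > 0" and t: "ereal (norm t) < fps_conv_radius H" "ereal (norm t) < fps_conv_radius F"
  shows "t * eval_fps (fps_deriv (fps_deriv H)) t + of_real (2 * \<rho>) * eval_fps (fps_deriv H) t
    = eval_fps H t * eval_fps F t"
proof -
  have H': "ereal (norm t) < fps_conv_radius (fps_deriv H)"
    by (rule less_le_trans[OF t(1) fps_conv_radius_deriv])
  have H'': "ereal (norm t) < fps_conv_radius (fps_deriv (fps_deriv H))"
    by (rule less_le_trans[OF H' fps_conv_radius_deriv])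
  have "ereal (norm t) < fps_conv_radius (fps_X * fps_deriv (fps_deriv H))"
      "ereal (norm t) < fps_conv_radius (fps_const (of_real (2 * \<rho>)) * fps_deriv H)"
    using H' H'' fps_conv_radius_mult[of fps_X "fps_deriv (fps_deriv H)"]
      fps_conv_radius_mult[of "fps_const (of_real (2 * \<rho>))" "fps_deriv H"]
    by (simp_all add: less_le_trans[of "ereal (norm t)"])
  then have "t * eval_fps (fps_deriv (fps_deriv H)) t + of_real (2 * \<rho>) * eval_fps (fps_deriv H) t
      = eval_fps (fps_X * fps_deriv (fps_deriv H) + fps_const (of_real (2 * \<rho>)) * fps_deriv H) t"
    using H' H'' by (simp add: eval_fps_add eval_fps_mult)
  also have "\<dots> = eval_fps (H * F) t"
    unfolding H_def frobenius_coeff_fps_equation[OF \<rho>] ..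
  also have "\<dots> = eval_fps H t * eval_fps F t"
    using t by (simp add: eval_fps_mult)
  finally show ?thesis .
qed

text \<open>The holomorphic factor h of the Frobenius solution t^\<rho> h(t) of t^2 v'' = A v, where
  \<rho>(\<rho> - 1) = A(0): the equation for h is t h'' + 2 \<rho> h' = B h with B(t) = (A(t) - A(0))/t.\<close>
lemma frobenius_series:
  fixes A :: "complex \<Rightarrow> complex" and R \<rho> :: real
  assumes A: "A holomorphic_on ball 0 R" and R: "R > 0" and \<rho>: "\<rho> > 0"
  obtains r h h' h'' where "0 < r" "r \<le> R" "h 0 = 1"
    "\<And>t. t \<in> ball 0 r \<Longrightarrow> (h has_field_derivative h' t) (at t)"
    "\<And>t. t \<in> ball 0 r \<Longrightarrow> (h' has_field_derivative h'' t) (at t)"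
    "\<And>t. t \<in> ball 0 r \<Longrightarrow> t\<^sup>2 * h'' t + 2 * of_real \<rho> * t * h' t = (A t - A 0) * h t"
proof -
  define B where "B = (\<lambda>z. if z = 0 then deriv A 0 else (A z - A 0) / (z - 0))"
  have B: "B holomorphic_on ball 0 R"
    unfolding B_def by (rule pole_lemma_open[OF A open_ball])
  define F where "F = fps_expansion B 0"
  have F_radius: "ereal R \<le> fps_conv_radius F"
    unfolding F_def using B by (intro conv_radius_fps_expansion) simp
  have F_eval: "eval_fps F t = B t" if "norm t < R" for t
    using eval_fps_expansion'[of B 0 "ereal R" t] B that by (simp add: F_def)
  define H where "H = Abs_fps (frobenius_coeff (fps_nth F) \<rho>)"
  obtain r where r: "0 < r" "r \<le> R" "ereal r \<le> fps_conv_radius H"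
    unfolding H_def by (rule frobenius_fps_conv_radius[OF F_radius R \<rho>])
  show ?thesis
  proof (rule that[OF r(1,2), of "eval_fps H" "eval_fps (fps_deriv H)" "eval_fps (fps_deriv (fps_deriv H))"])
    show "eval_fps H 0 = 1"
      by (simp add: eval_fps_at_0 H_def frobenius_coeff.simps)
    fix t :: complex assume "t \<in> ball 0 r"
    then have t: "norm t < R" "ereal (norm t) < fps_conv_radius H" "ereal (norm t) < fps_conv_radius F"
      using r less_le_trans[OF _ r(3), of "ereal (norm t)"] less_le_trans[OF _ F_radius, of "ereal (norm t)"]
      by auto
    show "(eval_fps H has_field_derivative eval_fps (fps_deriv H) t) (at t)"
      using t(2) by (rule has_field_derivative_eval_fps)
    show "(eval_fps (fps_deriv H) has_field_derivative eval_fps (fps_deriv (fps_deriv H)) t) (at t)"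
      using less_le_trans[OF t(2) fps_conv_radius_deriv] by (rule has_field_derivative_eval_fps)
    have "t * (t * eval_fps (fps_deriv (fps_deriv H)) t + of_real (2 * \<rho>) * eval_fps (fps_deriv H) t)
        = (t * B t) * eval_fps H t"
      using eval_frobenius_fps_equation[OF \<rho> t(2,3)[unfolded H_def]] F_eval[OF t(1)]
      by (simp add: H_def)
    moreover have "t * B t = A t - A 0"
      by (simp add: B_def)
    ultimately show "t\<^sup>2 * eval_fps (fps_deriv (fps_deriv H)) t + 2 * of_real \<rho> * t * eval_fps (fps_deriv H) t
        = (A t - A 0) * eval_fps H t"
      by (simp add: algebra_simps power2_eq_square)
  qed
qed

section \<open>Second order linear equations\<close>

definition ode_solution ::
    "(complex \<Rightarrow> complex) \<Rightarrow> complex set \<Rightarrow> (complex \<Rightarrow> complex) \<Rightarrow> (complex \<Rightarrow> complex) \<Rightarrow> bool" where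
  "ode_solution Q V f f' \<longleftrightarrow>
     (\<forall>t\<in>V. (f has_field_derivative f' t) (at t) \<and> (f' has_field_derivative Q t * f t) (at t))"

lemma ode_solution_subset: "ode_solution Q V f f' \<Longrightarrow> W \<subseteq> V \<Longrightarrow> ode_solution Q W f f'"
  by (auto simp: ode_solution_def)

lemma ode_solution_holomorphic_on:
  assumes "ode_solution Q V f f'" "open V"
  shows "f holomorphic_on V"
  using assms by (auto simp: ode_solution_def holomorphic_on_open)

lemma ode_solution_of_holomorphic:
  assumes "open V" "f holomorphic_on V" "\<And>t. t \<in> V \<Longrightarrow> deriv (deriv f) t = Q t * f t"
  shows "ode_solution Q V f (deriv f)"
  unfolding ode_solution_def
proof
  fix t assume t: "t \<in> V"
  have "deriv f holomorphic_on V"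
    using assms(2,1) by (rule holomorphic_deriv)
  then show "(f has_field_derivative deriv f t) (at t) \<and> (deriv f has_field_derivative Q t * f t) (at t)"
    using assms t by (metis holomorphic_derivI)
qed

lemma ode_solution_reflect:
  assumes "ode_solution Q U f f'"
  shows "ode_solution (\<lambda>t. Q (x0 - t)) ((\<lambda>t. x0 - t) -` U) (\<lambda>t. f (x0 - t)) (\<lambda>t. - f' (x0 - t))"
  unfolding ode_solution_def
proof
  fix t assume "t \<in> (\<lambda>t. x0 - t) -` U"
  then have f: "(f has_field_derivative f' (x0 - t)) (at (x0 - t))"
    and f': "(f' has_field_derivative Q (x0 - t) * f (x0 - t)) (at (x0 - t))"
    using assms by (auto simp: ode_solution_def)
  have reflect: "((\<lambda>t. x0 - t) has_field_derivative - 1) (at t)"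
    by (auto intro!: derivative_eq_intros)
  show "((\<lambda>t. f (x0 - t)) has_field_derivative - f' (x0 - t)) (at t) \<and>
      ((\<lambda>t. - f' (x0 - t)) has_field_derivative Q (x0 - t) * f (x0 - t)) (at t)"
    using DERIV_chain2[OF f reflect] DERIV_minus[OF DERIV_chain2[OF f' reflect]] by simp
qed

lemma ode_solution_inversion:
  assumes "ode_solution Q U f f'"
  shows "ode_solution (\<lambda>t. Q (inverse t) / t ^ 4) (inverse -` U - {0})
           (\<lambda>t. t * f (inverse t)) (\<lambda>t. f (inverse t) - f' (inverse t) / t)"
  unfolding ode_solution_def
proof
  fix t assume "t \<in> inverse -` U - {0}"
  then have t: "t \<noteq> 0" and f: "(f has_field_derivative f' (inverse t)) (at (inverse t))"
    and f': "(f' has_field_derivative Q (inverse t) * f (inverse t)) (at (inverse t))"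
    using assms by (auto simp: ode_solution_def)
  have inv: "(inverse has_field_derivative - (inverse t ^ 2)) (at t)"
    using DERIV_inverse[OF t] by (simp add: numeral_2_eq_2)
  note f_inv = DERIV_chain2[where g = inverse, OF f inv]
    and f'_inv = DERIV_chain2[where g = inverse, OF f' inv]
  have "((\<lambda>t. t * f (inverse t)) has_field_derivative f (inverse t) - f' (inverse t) / t) (at t)"
    by (rule DERIV_cong[OF DERIV_mult[OF DERIV_ident f_inv]]) (use t in \<open>simp add: field_simps power2_eq_square\<close>)
  moreover have "((\<lambda>t. f (inverse t) - f' (inverse t) / t) has_field_derivative
      Q (inverse t) / t ^ 4 * (t * f (inverse t))) (at t)"
    by (rule DERIV_cong[OF DERIV_diff[OF f_inv DERIV_divide[OF f'_inv DERIV_ident t]]])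
       (use t in \<open>simp add: field_simps power2_eq_square power4_eq_xxxx\<close>)
  ultimately show "((\<lambda>t. t * f (inverse t)) has_field_derivative f (inverse t) - f' (inverse t) / t) (at t) \<and>
      ((\<lambda>t. f (inverse t) - f' (inverse t) / t) has_field_derivative
        Q (inverse t) / t ^ 4 * (t * f (inverse t))) (at t)" ..
qed

lemma wronskian_constant:
  assumes "open V" "connected V" and f: "ode_solution Q V f f'" and g: "ode_solution Q V g g'"
  obtains c where "\<And>t. t \<in> V \<Longrightarrow> f t * g' t - f' t * g t = c"
proof -
  have deriv_zero: "((\<lambda>t. f t * g' t - f' t * g t) has_field_derivative 0) (at t)" if "t \<in> V" for t
  proof -
    have "((\<lambda>t. f t * g' t - f' t * g t) has_field_derivative
        (f' t * g' t + f t * (Q t * g t)) - ((Q t * f t) * g t + f' t * g' t)) (at t)"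
      using f g that unfolding ode_solution_def by (auto intro!: derivative_eq_intros)
    then show ?thesis
      by (simp add: algebra_simps)
  qed
  then have "continuous_on V (\<lambda>t. f t * g' t - f' t * g t)"
    by (meson DERIV_isCont continuous_at_imp_continuous_on)
  then show ?thesis
    using DERIV_zero_connected_constant[OF assms(2,1) finite.emptyI] deriv_zero that by blast
qed

text \<open>Solving the 2 x 2 system with the constant Wronskians as Cramer coefficients.\<close>
lemma ode_solution_in_fundamental_system:
  assumes V: "open V" "connected V"
    and f: "ode_solution Q V f f'" and g: "ode_solution Q V g g'" and v: "ode_solution Q V v v'"
    and w: "w \<noteq> 0" "\<And>t. t \<in> V \<Longrightarrow> f t * g' t - f' t * g t = w"
  obtains a b where "\<And>t. t \<in> V \<Longrightarrow> v t = a * f t + b * g t \<and> v' t = a * f' t + b * g' t"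
proof -
  obtain k1 where k1: "\<And>t. t \<in> V \<Longrightarrow> v t * g' t - v' t * g t = k1"
    using wronskian_constant[OF V v g] by blast
  obtain k2 where k2: "\<And>t. t \<in> V \<Longrightarrow> f t * v' t - f' t * v t = k2"
    using wronskian_constant[OF V f v] by blast
  show ?thesis
  proof (rule that[of "k1 / w" "k2 / w"])
    fix t assume t: "t \<in> V"
    have "k1 * f t + k2 * g t = v t * (f t * g' t - f' t * g t)"
      and "k1 * f' t + k2 * g' t = v' t * (f t * g' t - f' t * g t)"
      by (simp_all add: k1[OF t, symmetric] k2[OF t, symmetric] algebra_simps)
    then show "v t = k1 / w * f t + k2 / w * g t \<and> v' t = k1 / w * f' t + k2 / w * g' t"
      using w t by (simp add: field_simps)
  qed
qed

lemma ode_solutions_dependent_of_wronskian_zero: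
  assumes V: "open V" "connected V" and f: "ode_solution Q V f f'" and g: "ode_solution Q V g g'"
    and x: "x \<in> V" "f x * g' x - f' x * g x = 0"
  obtains a b where "(a, b) \<noteq> (0, 0)" "\<And>y. y \<in> V \<Longrightarrow> a * f y + b * g y = 0"
proof (cases "\<forall>y\<in>V. f y = 0")
  case True
  then show ?thesis
    by (intro that[of 1 0]) auto
next
  case False
  then obtain x1 where x1: "x1 \<in> V" "f x1 \<noteq> 0" by auto
  obtain c where c: "\<And>t. t \<in> V \<Longrightarrow> f t * g' t - f' t * g t = c"
    using wronskian_constant[OF V f g] by blast
  with x have c0: "c = 0" by force
  have hol: "f holomorphic_on V" "g holomorphic_on V"
    using f g V(1) by (auto intro: ode_solution_holomorphic_on)
  have "open (V \<inter> f -` (- {0}))"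
    using hol(1) V(1) by (intro continuous_open_preimage holomorphic_on_imp_continuous_on) auto
  moreover have "x1 \<in> V \<inter> f -` (- {0})"
    using x1 by auto
  ultimately obtain e where e: "e > 0" "ball x1 e \<subseteq> V \<inter> f -` (- {0})"
    by (meson open_contains_ball)
  text \<open>On a ball where f does not vanish, (g/f)' = - W/f^2 = 0, so g = k f there.\<close>
  have quotient_deriv: "((\<lambda>y. g y / f y) has_field_derivative 0) (at y)" if y: "y \<in> ball x1 e" for y
  proof -
    have "y \<in> V" "f y \<noteq> 0" using y e(2) by auto
    with f g have "((\<lambda>y. g y / f y) has_field_derivative (g' y * f y - g y * f' y) / (f y * f y)) (at y)"
      by (auto simp: ode_solution_def intro!: derivative_eq_intros)
    moreover have "g' y * f y - g y * f' y = 0"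
      using c[OF \<open>y \<in> V\<close>] c0 by (simp add: algebra_simps)
    ultimately show ?thesis by simp
  qed
  then have "continuous_on (ball x1 e) (\<lambda>y. g y / f y)"
    by (meson DERIV_isCont continuous_at_imp_continuous_on)
  then obtain k where k: "\<And>y. y \<in> ball x1 e \<Longrightarrow> g y / f y = k"
    using DERIV_zero_connected_constant[OF connected_ball open_ball finite.emptyI] quotient_deriv by blast
  have "g y - k * f y = 0" if "y \<in> V" for y
  proof (rule analytic_continuation_open[of "ball x1 e" V "\<lambda>y. g y - k * f y" "\<lambda>y. 0"])
    show "g y - k * f y = 0" if "y \<in> ball x1 e" for y
    proof -
      have "f y \<noteq> 0" using that e(2) by auto
      then show ?thesis using k[OF that] by (simp add: field_simps)
    qed
  qed (use e V hol that in \<open>auto intro!: holomorphic_intros\<close>)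
  then show ?thesis
    by (intro that[of "- k" 1]) (auto simp: algebra_simps)
qed

lemma ode_solution_reduction_of_order:
  assumes f: "ode_solution Q V f f'"
    and G: "\<And>t. t \<in> V \<Longrightarrow> f t \<noteq> 0 \<and> (G has_field_derivative inverse (f t ^ 2)) (at t)"
  shows "ode_solution Q V (\<lambda>t. f t * G t) (\<lambda>t. f' t * G t + inverse (f t))"
    and "\<And>t. t \<in> V \<Longrightarrow> f t * (f' t * G t + inverse (f t)) - f' t * (f t * G t) = 1"
proof -
  show "ode_solution Q V (\<lambda>t. f t * G t) (\<lambda>t. f' t * G t + inverse (f t))"
    unfolding ode_solution_def
  proof
    fix t assume t: "t \<in> V"
    then have "(f has_field_derivative f' t) (at t)" "(f' has_field_derivative Q t * f t) (at t)"
        "f t \<noteq> 0" "(G has_field_derivative inverse (f t ^ 2)) (at t)"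
      using f G by (auto simp: ode_solution_def)
    then show "((\<lambda>t. f t * G t) has_field_derivative f' t * G t + inverse (f t)) (at t) \<and>
        ((\<lambda>t. f' t * G t + inverse (f t)) has_field_derivative Q t * (f t * G t)) (at t)"
      by (auto intro!: derivative_eq_intros simp: field_simps power2_eq_square)
  qed
  show "f t * (f' t * G t + inverse (f t)) - f' t * (f t * G t) = 1" if "t \<in> V" for t
    using G[OF that] by (simp add: field_simps)
qed

section \<open>Half discs and logarithms\<close>

lemma connected_convex_minus_real_points:
  assumes "convex S" "a \<in> S" "Im a \<noteq> 0" "\<And>x. x \<in> S \<Longrightarrow> 0 \<le> Im x * Im a"
    and "\<And>x. x \<in> P \<Longrightarrow> Im x = 0"
  shows "connected (S - P)"
proof -
  have "closed_segment a x \<subseteq> S - P" if x: "x \<in> S - P" for x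
  proof
    fix z assume z: "z \<in> closed_segment a x"
    then obtain u where u: "0 \<le> u" "u \<le> 1" "z = (1 - u) *\<^sub>R a + u *\<^sub>R x"
      by (auto simp: closed_segment_def)
    have "z \<in> S"
      using closed_segment_subset[OF assms(2) _ assms(1), of x] x z by auto
    moreover have "z \<notin> P"
    proof (cases "u = 1")
      case True
      then show ?thesis using u x by simp
    next
      case False
      have "Im z * Im a = (1 - u) * (Im a)\<^sup>2 + u * (Im x * Im a)"
        by (simp add: u(3) algebra_simps power2_eq_square)
      also have "\<dots> > 0"
        using u False x assms(3,4) by (intro add_pos_nonneg) auto
      finally show ?thesis using assms(5) by force
    qed
    ultimately show "z \<in> S - P" by blast
  qed
  moreover have "a \<in> S - P"
    using assms(2,3,5) by auto
  ultimately have "starlike (S - P)"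
    unfolding starlike_def by blast
  then show ?thesis
    by (rule starlike_imp_connected)
qed

lemma connected_open_superset:
  fixes S :: "'a::real_normed_vector set"
  assumes "open S" "connected C" "C \<subseteq> S" "C \<noteq> {}"
  obtains V where "open V" "connected V" "C \<subseteq> V" "V \<subseteq> S"
proof -
  obtain a where a: "a \<in> C" using assms(4) by auto
  show ?thesis
  proof (rule that)
    show "open (connected_component_set S a)"
      using assms(1) by (rule open_connected_component)
    show "connected (connected_component_set S a)"
      by (rule connected_connected_component)
    show "C \<subseteq> connected_component_set S a"
      by (rule connected_component_maximal[OF a assms(2,3)])
  qed (rule connected_component_subset)
qed

definition lower_half_disc :: "real \<Rightarrow> complex set" where
  "lower_half_disc r = {t. t \<noteq> 0 \<and> cmod t < r \<and> Im t \<le> 0}"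

lemma lower_half_disc_mono: "r \<le> r' \<Longrightarrow> lower_half_disc r \<subseteq> lower_half_disc r'"
  by (auto simp: lower_half_disc_def)

lemma lower_half_disc_subset_ball: "lower_half_disc r \<subseteq> ball 0 r"
  by (auto simp: lower_half_disc_def)

lemma lower_half_disc_nonempty: "r > 0 \<Longrightarrow> - \<i> * of_real (r / 2) \<in> lower_half_disc r"
  by (simp add: lower_half_disc_def norm_mult)

lemma connected_lower_half_disc:
  assumes "r > 0"
  shows "connected (lower_half_disc r)"
proof -
  let ?a = "- \<i> * of_real (r / 2)"
  have "connected (ball 0 r \<inter> {z. Im z \<le> 0} - {0})"
  proof (rule connected_convex_minus_real_points)
    show "convex (ball 0 r \<inter> {z. Im z \<le> 0})"
      by (intro convex_Int convex_ball convex_halfspace_Im_le)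
    show "?a \<in> ball 0 r \<inter> {z. Im z \<le> 0}" "Im ?a \<noteq> 0"
      using assms by (simp_all add: norm_mult)
    show "0 \<le> Im x * Im ?a" if "x \<in> ball 0 r \<inter> {z. Im z \<le> 0}" for x
      using that assms by (auto intro: mult_nonpos_nonneg)
  qed simp
  also have "ball 0 r \<inter> {z. Im z \<le> 0} - {0} = lower_half_disc r"
    by (auto simp: lower_half_disc_def)
  finally show ?thesis .
qed

lemma at_within_lower_half_disc_shrink:
  assumes "0 < r" "r \<le> r'"
  shows "at 0 within lower_half_disc r' = at 0 within lower_half_disc r"
  by (rule at_within_nhd[of _ "ball 0 r"]) (use assms in \<open>auto simp: lower_half_disc_def\<close>)

lemma at_within_lower_half_disc_nontrivial:
  assumes "r > 0"
  shows "at 0 within lower_half_disc r \<noteq> bot"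
proof -
  have "lower_half_disc r \<inter> ball 0 e - {0} \<noteq> {}" if "e > 0" for e
  proof -
    have "- \<i> * of_real (min e r / 2) \<in> lower_half_disc r \<inter> ball 0 e - {0}"
      using assms that by (auto simp: lower_half_disc_def norm_mult)
    then show ?thesis by blast
  qed
  then show ?thesis
    by (simp add: not_trivial_limit_within_ball)
qed

lemma lower_half_disc_neighbourhood:
  assumes "open S" "lower_half_disc 1 \<subseteq> S" "0 < r" "r \<le> 1"
  obtains V where "open V" "connected V" "lower_half_disc r \<subseteq> V" "V \<subseteq> S \<inter> ball 0 r"
proof (rule connected_open_superset)
  show "open (S \<inter> ball 0 r)"
    using assms(1) by auto
  show "lower_half_disc r \<subseteq> S \<inter> ball 0 r"
    using assms lower_half_disc_mono lower_half_disc_subset_ball by blast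
  show "connected (lower_half_disc r)"
    using assms(3) by (rule connected_lower_half_disc)
  show "lower_half_disc r \<noteq> {}"
    using lower_half_disc_nonempty[OF assms(3)] by blast
qed

definition log_branch_on :: "(complex \<Rightarrow> complex) \<Rightarrow> complex set \<Rightarrow> bool" where
  "log_branch_on lg V \<longleftrightarrow> (\<forall>t\<in>V. exp (lg t) = t \<and> (lg has_field_derivative 1 / t) (at t))"

lemma log_branch_on_subset: "log_branch_on lg V \<Longrightarrow> W \<subseteq> V \<Longrightarrow> log_branch_on lg W"
  by (auto simp: log_branch_on_def)

text \<open>The branch Ln(\<i> t) - Ln \<i>, cut along the positive imaginary axis.\<close>
lemma log_branch_lower_half_disc:
  obtains lg \<Omega> where "open \<Omega>" "lower_half_disc 1 \<subseteq> \<Omega>" "log_branch_on lg \<Omega>"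
proof
  let ?\<Omega> = "(\<lambda>t. \<i> * t) -` (- \<real>\<^sub>\<le>\<^sub>0)"
  show "open ?\<Omega>"
    by (intro continuous_open_vimage open_Compl closed_nonpos_Reals_complex continuous_intros)
  show "lower_half_disc 1 \<subseteq> ?\<Omega>"
    by (auto simp: lower_half_disc_def complex_nonpos_Reals_iff complex_eq_iff)
  show "log_branch_on (\<lambda>t. Ln (\<i> * t) - Ln \<i>) ?\<Omega>"
    unfolding log_branch_on_def
  proof
    fix t assume "t \<in> ?\<Omega>"
    then have it: "\<i> * t \<notin> \<real>\<^sub>\<le>\<^sub>0" and t: "t \<noteq> 0" by auto
    have "((\<lambda>t. \<i> * t) has_field_derivative \<i>) (at t)"
      by (auto intro!: derivative_eq_intros)
    then have "((\<lambda>t. Ln (\<i> * t) - Ln \<i>) has_field_derivative inverse (\<i> * t) * \<i> - 0) (at t)"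
      by (intro DERIV_diff DERIV_chain2[where g = "\<lambda>t. \<i> * t", OF has_field_derivative_Ln[OF it]]) auto
    moreover have "exp (Ln (\<i> * t) - Ln \<i>) = t"
      unfolding exp_diff by (subst (1 2) exp_Ln) (use t in auto)
    ultimately show "exp (Ln (\<i> * t) - Ln \<i>) = t \<and> ((\<lambda>t. Ln (\<i> * t) - Ln \<i>) has_field_derivative 1 / t) (at t)"
      using t by (simp add: field_simps)
  qed
qed

lemma norm_exp_mult_log:
  fixes lg :: "complex \<Rightarrow> complex"
  assumes "exp (lg t) = t"
  shows "norm (exp (of_real c * lg t)) = norm t powr c"
proof -
  have "norm t = exp (Re (lg t))"
    using assms norm_exp_eq_Re by metis
  moreover have "t \<noteq> 0"
    using assms by auto
  ultimately show ?thesis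
    by (simp add: powr_def)
qed

lemma tendsto_exp_mult_log_zero:
  fixes lg :: "complex \<Rightarrow> complex" and X :: "complex set"
  assumes "c > 0" "\<And>t. t \<in> X \<Longrightarrow> exp (lg t) = t"
  shows "((\<lambda>t. exp (of_real c * lg t)) \<longlongrightarrow> 0) (at 0 within X)"
proof (rule tendsto_norm_zero_cancel)
  have "((\<lambda>t. norm t powr c) \<longlongrightarrow> 0) (at 0 within X)"
    using assms(1) by (intro tendsto_zero_powrI) (auto intro!: tendsto_norm_zero)
  moreover have "eventually (\<lambda>t. norm t powr c = norm (exp (of_real c * lg t))) (at 0 within X)"
    unfolding eventually_at_filter by (intro always_eventually allI impI) (metis norm_exp_mult_log assms(2))
  ultimately show "((\<lambda>t. norm (exp (of_real c * lg t))) \<longlongrightarrow> 0) (at 0 within X)"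
    by (rule Lim_transform_eventually)
qed

lemma tendsto_inverse_log_zero:
  fixes lg :: "complex \<Rightarrow> complex" and X :: "complex set"
  assumes "\<And>t. t \<in> X \<Longrightarrow> exp (lg t) = t"
  shows "((\<lambda>t. inverse (lg t)) \<longlongrightarrow> 0) (at 0 within X)"
proof -
  have "filterlim (\<lambda>t. cmod t) (at_right 0) (at 0 within X)"
    by (rule tendsto_imp_filterlim_at_right)
       (auto intro!: tendsto_norm_zero simp: eventually_at_filter)
  then have "filterlim (\<lambda>t. - ln (cmod t)) at_top (at 0 within X)"
    by (simp add: filterlim_uminus_at_top filterlim_compose[OF ln_at_0])
  moreover have "eventually (\<lambda>t. - ln (cmod t) \<le> norm (lg t)) (at 0 within X)"
    unfolding eventually_at_filter
  proof (intro always_eventually allI impI)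
    fix t assume "t \<noteq> 0" "t \<in> X"
    then have "Re (lg t) = ln (cmod t)"
      using assms norm_exp_eq_Re[of "lg t"] by (metis ln_exp)
    then show "- ln (cmod t) \<le> norm (lg t)"
      using abs_Re_le_cmod[of "lg t"] by simp
  qed
  ultimately have "filterlim (\<lambda>t. norm (lg t)) at_top (at 0 within X)"
    by (rule filterlim_at_top_mono)
  then show ?thesis
    by (intro filterlim_compose[OF tendsto_inverse_0] filterlim_norm_at_top_imp_at_infinity)
qed

section \<open>Fundamental systems at a regular singular point\<close>

lemma frobenius_ode_solution:
  fixes A h h' h'' lg :: "complex \<Rightarrow> complex" and \<rho> :: real
  assumes h: "\<And>t. t \<in> V \<Longrightarrow> (h has_field_derivative h' t) (at t)"
    and h': "\<And>t. t \<in> V \<Longrightarrow> (h' has_field_derivative h'' t) (at t)"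
    and frobenius_eq: "\<And>t. t \<in> V \<Longrightarrow> t\<^sup>2 * h'' t + 2 * of_real \<rho> * t * h' t = (A t - A 0) * h t"
    and indicial: "of_real (\<rho> * (\<rho> - 1)) = A 0" and lg: "log_branch_on lg V"
  shows "ode_solution (\<lambda>t. A t / t\<^sup>2) V (\<lambda>t. exp (of_real \<rho> * lg t) * h t)
    (\<lambda>t. exp (of_real \<rho> * lg t) * (of_real \<rho> * h t / t + h' t))"
  unfolding ode_solution_def
proof
  fix t assume t: "t \<in> V"
  then have t0: "t \<noteq> 0" and lg': "(lg has_field_derivative 1 / t) (at t)"
    using lg by (auto simp: log_branch_on_def)
  let ?p = "exp (of_real \<rho> * lg t)"
  have p: "((\<lambda>t. exp (of_real \<rho> * lg t)) has_field_derivative of_real \<rho> * ?p / t) (at t)"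
    using lg' by (auto intro!: derivative_eq_intros simp: field_simps)
  have "((\<lambda>t. of_real \<rho> * h t / t + h' t) has_field_derivative
      (of_real \<rho> * h' t * t - of_real \<rho> * h t * 1) / (t * t) + h'' t) (at t)"
    using t0 by (auto intro!: derivative_eq_intros h[OF t] h'[OF t])
  then have second: "((\<lambda>t. exp (of_real \<rho> * lg t) * (of_real \<rho> * h t / t + h' t)) has_field_derivative
      ?p * ((of_real \<rho> * h' t * t - of_real \<rho> * h t * 1) / (t * t) + h'' t)
        + of_real \<rho> * ?p / t * (of_real \<rho> * h t / t + h' t)) (at t)"
    by (rule DERIV_mult'[OF p])
  have "?p * ((of_real \<rho> * h' t * t - of_real \<rho> * h t * 1) / (t * t) + h'' t)
        + of_real \<rho> * ?p / t * (of_real \<rho> * h t / t + h' t)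
      = ?p / t\<^sup>2 * (of_real (\<rho> * (\<rho> - 1)) * h t + (t\<^sup>2 * h'' t + 2 * of_real \<rho> * t * h' t))"
    using t0 by (simp add: field_simps power2_eq_square)
  also have "\<dots> = A t / t\<^sup>2 * (?p * h t)"
    unfolding frobenius_eq[OF t] indicial by (simp add: algebra_simps)
  finally have "((\<lambda>t. exp (of_real \<rho> * lg t) * (of_real \<rho> * h t / t + h' t)) has_field_derivative
      A t / t\<^sup>2 * (?p * h t)) (at t)"
    by (rule DERIV_cong[OF second])
  moreover have "((\<lambda>t. exp (of_real \<rho> * lg t) * h t) has_field_derivative
      ?p * (of_real \<rho> * h t / t + h' t)) (at t)"
    by (rule DERIV_cong[OF DERIV_mult[OF p h[OF t]]]) (simp add: algebra_simps)
  ultimately show "((\<lambda>t. exp (of_real \<rho> * lg t) * h t) has_field_derivative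
        exp (of_real \<rho> * lg t) * (of_real \<rho> * h t / t + h' t)) (at t) \<and>
      ((\<lambda>t. exp (of_real \<rho> * lg t) * (of_real \<rho> * h t / t + h' t)) has_field_derivative
        A t / t\<^sup>2 * (exp (of_real \<rho> * lg t) * h t)) (at t)"
    by simp
qed

lemma frobenius_solution:
  fixes A :: "complex \<Rightarrow> complex" and \<rho> :: real
  assumes A: "A holomorphic_on ball 0 1" and \<rho>: "\<rho> > 0" and indicial: "of_real (\<rho> * (\<rho> - 1)) = A 0"
  obtains r h h' where "0 < r" "r \<le> 1" "h 0 = 1" "isCont h 0" "isCont h' 0" "h holomorphic_on ball 0 r"
    "\<And>V lg. V \<subseteq> ball 0 r \<Longrightarrow> log_branch_on lg V \<Longrightarrow>
       ode_solution (\<lambda>t. A t / t\<^sup>2) V (\<lambda>t. exp (of_real \<rho> * lg t) * h t)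
         (\<lambda>t. exp (of_real \<rho> * lg t) * (of_real \<rho> * h t / t + h' t))"
proof -
  obtain r h h' h'' where r: "0 < r" "r \<le> 1" and h0: "h 0 = 1"
    and h: "\<And>t. t \<in> ball 0 r \<Longrightarrow> (h has_field_derivative h' t) (at t)"
    and h': "\<And>t. t \<in> ball 0 r \<Longrightarrow> (h' has_field_derivative h'' t) (at t)"
    and frobenius_eq: "\<And>t. t \<in> ball 0 r \<Longrightarrow> t\<^sup>2 * h'' t + 2 * of_real \<rho> * t * h' t = (A t - A 0) * h t"
    using frobenius_series[OF A zero_less_one \<rho>] by blast
  show ?thesis
  proof (rule that[of r h h'])
    show "0 < r" "r \<le> 1" "h 0 = 1"
      using r h0 by simp_all
    show "isCont h 0" "isCont h' 0"
      using h[of 0] h'[of 0] r(1) by (auto intro: DERIV_isCont)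
    show "h holomorphic_on ball 0 r"
      unfolding holomorphic_on_open[OF open_ball] using h by blast
    show "ode_solution (\<lambda>t. A t / t\<^sup>2) V (\<lambda>t. exp (of_real \<rho> * lg t) * h t)
        (\<lambda>t. exp (of_real \<rho> * lg t) * (of_real \<rho> * h t / t + h' t))"
      if "V \<subseteq> ball 0 r" "log_branch_on lg V" for V lg
    proof (rule frobenius_ode_solution[where A = A and \<rho> = \<rho>, OF _ _ _ indicial that(2)])
      fix t assume "t \<in> V"
      then have "t \<in> ball 0 r"
        using that(1) by blast
      then show "(h has_field_derivative h' t) (at t)" "(h' has_field_derivative h'' t) (at t)"
          "t\<^sup>2 * h'' t + 2 * of_real \<rho> * t * h' t = (A t - A 0) * h t"
        by (rule h h' frobenius_eq)+
    qed
  qed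
qed

lemma wronskian_frobenius_solutions:
  fixes lg h h' k k' :: "complex \<Rightarrow> complex" and a b :: real
  assumes "exp (lg t) = t" "a + b = 1"
  defines "P \<equiv> \<lambda>c. exp (of_real c * lg t)"
  shows "(P a * h t) * (P b * (of_real b * k t / t + k' t)) - (P a * (of_real a * h t / t + h' t)) * (P b * k t)
    = of_real (b - a) * h t * k t + t * (h t * k' t - h' t * k t)"
proof -
  have "P a * P b = exp ((of_real a + of_real b) * lg t)"
    by (simp add: P_def exp_add[symmetric] algebra_simps)
  also have "of_real a + of_real b = (1 :: complex)"
    using assms(2) by (metis of_real_1 of_real_add)
  finally have "P a * P b = t"
    using assms(1) by simp
  moreover have "t \<noteq> 0"
    using assms(1) by auto
  ultimately show ?thesis
    by (simp add: field_simps) (simp add: algebra_simps flip: \<open>P a * P b = t\<close>)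
qed

definition normalised_fundamental_system ::
    "(complex \<Rightarrow> complex) \<Rightarrow> complex set \<Rightarrow> complex filter \<Rightarrow> (complex \<Rightarrow> complex) \<Rightarrow> complex \<Rightarrow>
     (complex \<Rightarrow> complex) \<Rightarrow> (complex \<Rightarrow> complex) \<Rightarrow> (complex \<Rightarrow> complex) \<Rightarrow> (complex \<Rightarrow> complex) \<Rightarrow> bool" where
  "normalised_fundamental_system Q V F N \<kappa> f1 f1' f2 f2' \<longleftrightarrow>
     ode_solution Q V f1 f1' \<and> ode_solution Q V f2 f2' \<and>
     (\<exists>w. w \<noteq> 0 \<and> (\<forall>t\<in>V. f1 t * f2' t - f1' t * f2 t = w)) \<and>
     ((\<lambda>t. f1 t / N t) \<longlongrightarrow> 0) F \<and> ((\<lambda>t. f2 t / N t) \<longlongrightarrow> 1) F \<and>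
     ((\<lambda>t. t * f1' t / N t) \<longlongrightarrow> 0) F \<and> ((\<lambda>t. t * f2' t / N t) \<longlongrightarrow> \<kappa>) F"

lemma normalised_fundamental_system_limits:
  assumes V: "open V" "connected V" and F: "eventually (\<lambda>t. t \<in> V) F"
    and fs: "normalised_fundamental_system Q V F N \<kappa> f1 f1' f2 f2'"
    and v0: "ode_solution Q V v0 v0'" and v1: "ode_solution Q V v1 v1'"
    and x: "x \<in> V" "v0 x * v1' x - v0' x * v1 x \<noteq> 0"
  obtains p0 p1 where "(p0, p1) \<noteq> (0, 0)"
    "((\<lambda>t. v0 t / N t) \<longlongrightarrow> p0) F" "((\<lambda>t. v1 t / N t) \<longlongrightarrow> p1) F"
    "((\<lambda>t. t * v0' t / N t) \<longlongrightarrow> \<kappa> * p0) F" "((\<lambda>t. t * v1' t / N t) \<longlongrightarrow> \<kappa> * p1) F"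
proof -
  obtain w where f: "ode_solution Q V f1 f1'" "ode_solution Q V f2 f2'"
    and w: "w \<noteq> 0" "\<And>t. t \<in> V \<Longrightarrow> f1 t * f2' t - f1' t * f2 t = w"
    and lim: "((\<lambda>t. f1 t / N t) \<longlongrightarrow> 0) F" "((\<lambda>t. f2 t / N t) \<longlongrightarrow> 1) F"
      "((\<lambda>t. t * f1' t / N t) \<longlongrightarrow> 0) F" "((\<lambda>t. t * f2' t / N t) \<longlongrightarrow> \<kappa>) F"
    using fs unfolding normalised_fundamental_system_def by blast
  have coefficient_limits: "((\<lambda>t. v t / N t) \<longlongrightarrow> b) F \<and> ((\<lambda>t. t * v' t / N t) \<longlongrightarrow> \<kappa> * b) F"
    if ab: "\<And>t. t \<in> V \<Longrightarrow> v t = a * f1 t + b * f2 t \<and> v' t = a * f1' t + b * f2' t" for v v' a b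
  proof
    have "((\<lambda>t. a * (f1 t / N t) + b * (f2 t / N t)) \<longlongrightarrow> a * 0 + b * 1) F"
      by (intro tendsto_intros lim)
    moreover have "eventually (\<lambda>t. a * (f1 t / N t) + b * (f2 t / N t) = v t / N t) F"
      using F by eventually_elim (simp add: ab add_divide_distrib)
    ultimately show "((\<lambda>t. v t / N t) \<longlongrightarrow> b) F"
      by (simp add: Lim_transform_eventually)
    have "((\<lambda>t. a * (t * f1' t / N t) + b * (t * f2' t / N t)) \<longlongrightarrow> a * 0 + b * \<kappa>) F"
      by (intro tendsto_intros lim)
    moreover have "eventually (\<lambda>t. a * (t * f1' t / N t) + b * (t * f2' t / N t) = t * v' t / N t) F"
      using F by eventually_elim (simp add: ab add_divide_distrib distrib_left mult.left_commute)
    ultimately show "((\<lambda>t. t * v' t / N t) \<longlongrightarrow> \<kappa> * b) F"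
      by (simp add: Lim_transform_eventually mult.commute)
  qed
  obtain a0 b0 where ab0: "\<And>t. t \<in> V \<Longrightarrow> v0 t = a0 * f1 t + b0 * f2 t \<and> v0' t = a0 * f1' t + b0 * f2' t"
    using ode_solution_in_fundamental_system[OF V f v0 w] by blast
  obtain a1 b1 where ab1: "\<And>t. t \<in> V \<Longrightarrow> v1 t = a1 * f1 t + b1 * f2 t \<and> v1' t = a1 * f1' t + b1 * f2' t"
    using ode_solution_in_fundamental_system[OF V f v1 w] by blast
  have "(b0, b1) \<noteq> (0, 0)"
  proof
    assume "(b0, b1) = (0, 0)"
    then have "v0 x * v1' x - v0' x * v1 x = 0"
      using ab0[OF x(1)] ab1[OF x(1)] by (simp add: algebra_simps)
    with x(2) show False ..
  qed
  then show ?thesis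
    using that coefficient_limits[OF ab0] coefficient_limits[OF ab1] by blast
qed

lemma isCont_tendsto_within: "isCont f a \<Longrightarrow> (f \<longlongrightarrow> f a) (at a within X)"
  by (rule tendsto_within_subset[OF isContD subset_UNIV])

lemma eventually_at_within_lower_half_disc:
  "lower_half_disc r \<subseteq> V \<Longrightarrow> eventually (\<lambda>t. t \<in> V \<and> t \<in> lower_half_disc r) (at 0 within lower_half_disc r)"
  unfolding eventually_at_filter by (intro always_eventually) auto

lemma wronskian_power_pair_nonzero:
  fixes Q lg hp hp' hm hm' :: "complex \<Rightarrow> complex" and \<rho>p \<rho>m r :: real
  defines "f1 \<equiv> \<lambda>t. exp (of_real \<rho>p * lg t) * hp t"
    and "f1' \<equiv> \<lambda>t. exp (of_real \<rho>p * lg t) * (of_real \<rho>p * hp t / t + hp' t)"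
    and "f2 \<equiv> \<lambda>t. exp (of_real \<rho>m * lg t) * hm t"
    and "f2' \<equiv> \<lambda>t. exp (of_real \<rho>m * lg t) * (of_real \<rho>m * hm t / t + hm' t)"
  assumes V: "open V" "connected V" "lower_half_disc r \<subseteq> V" "r > 0" and lg: "log_branch_on lg V"
    and \<rho>: "\<rho>m < \<rho>p" "\<rho>p + \<rho>m = 1"
    and h: "hp 0 = 1" "hm 0 = 1" "isCont hp 0" "isCont hp' 0" "isCont hm 0" "isCont hm' 0"
    and sol: "ode_solution Q V f1 f1'" "ode_solution Q V f2 f2'"
  obtains c where "c \<noteq> 0" "\<And>t. t \<in> V \<Longrightarrow> f1 t * f2' t - f1' t * f2 t = c"
proof -
  let ?F = "at 0 within lower_half_disc r"
  define E where "E = (\<lambda>t. of_real (\<rho>m - \<rho>p) * hp t * hm t + t * (hp t * hm' t - hp' t * hm t))"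
  have W: "f1 t * f2' t - f1' t * f2 t = E t" if "t \<in> V" for t
    unfolding f1_def f1'_def f2_def f2'_def E_def
    by (rule wronskian_frobenius_solutions) (use lg that \<rho> in \<open>auto simp: log_branch_on_def\<close>)
  obtain c where c: "\<And>t. t \<in> V \<Longrightarrow> f1 t * f2' t - f1' t * f2 t = c"
    using wronskian_constant[OF V(1,2) sol] by blast
  have "(E \<longlongrightarrow> E 0) ?F"
    unfolding E_def by (intro tendsto_intros isCont_tendsto_within h)
  moreover have "eventually (\<lambda>t. E t = c) ?F"
    using eventually_at_within_lower_half_disc[OF V(3)] by eventually_elim (use W c in auto)
  ultimately have "((\<lambda>t. c) \<longlongrightarrow> E 0) ?F"
    by (rule Lim_transform_eventually)
  then have "c = E 0"
    using tendsto_unique[OF at_within_lower_half_disc_nontrivial[OF V(4)] tendsto_const] by blast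
  then have "c \<noteq> 0"
    using h(1,2) \<rho>(1) by (simp add: E_def)
  with c show ?thesis
    using that by blast
qed

lemma normalised_fundamental_system_power_pair:
  fixes Q lg hp hp' hm hm' :: "complex \<Rightarrow> complex" and \<rho>p \<rho>m r :: real
  defines "f1 \<equiv> \<lambda>t. exp (of_real \<rho>p * lg t) * hp t"
    and "f1' \<equiv> \<lambda>t. exp (of_real \<rho>p * lg t) * (of_real \<rho>p * hp t / t + hp' t)"
    and "f2 \<equiv> \<lambda>t. exp (of_real \<rho>m * lg t) * hm t"
    and "f2' \<equiv> \<lambda>t. exp (of_real \<rho>m * lg t) * (of_real \<rho>m * hm t / t + hm' t)"
  assumes V: "open V" "connected V" "lower_half_disc r \<subseteq> V" "r > 0" and lg: "log_branch_on lg V"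
    and \<rho>: "\<rho>m < \<rho>p" "\<rho>p + \<rho>m = 1"
    and h: "hp 0 = 1" "hm 0 = 1" "isCont hp 0" "isCont hp' 0" "isCont hm 0" "isCont hm' 0"
    and sol: "ode_solution Q V f1 f1'" "ode_solution Q V f2 f2'"
  shows "normalised_fundamental_system Q V (at 0 within lower_half_disc r)
           (\<lambda>t. exp (of_real \<rho>m * lg t)) (of_real \<rho>m) f1 f1' f2 f2'"
proof -
  let ?F = "at 0 within lower_half_disc r"
  let ?N = "\<lambda>t. exp (of_real \<rho>m * lg t)"
  have F: "eventually (\<lambda>t. t \<in> V \<and> t \<in> lower_half_disc r) ?F"
    using V(3) by (rule eventually_at_within_lower_half_disc)
  have "((\<lambda>t. exp (of_real (\<rho>p - \<rho>m) * lg t)) \<longlongrightarrow> 0) ?F"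
    using \<rho>(1) lg V(3) by (intro tendsto_exp_mult_log_zero) (auto simp: log_branch_on_def)
  moreover have "exp (of_real \<rho>p * lg t) / ?N t = exp (of_real (\<rho>p - \<rho>m) * lg t)" for t
    by (simp add: exp_diff[symmetric] algebra_simps)
  ultimately have dominated: "((\<lambda>t. exp (of_real \<rho>p * lg t) / ?N t) \<longlongrightarrow> 0) ?F"
    by simp
  obtain c where c: "c \<noteq> 0" "\<And>t. t \<in> V \<Longrightarrow> f1 t * f2' t - f1' t * f2 t = c"
    using wronskian_power_pair_nonzero[OF V lg \<rho> h sol[unfolded f1_def f1'_def f2_def f2'_def]]
    unfolding f1_def f1'_def f2_def f2'_def by blast
  show ?thesis
    unfolding normalised_fundamental_system_def
  proof (intro conjI sol exI[of _ c] ballI c)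
    have "((\<lambda>t. exp (of_real \<rho>p * lg t) / ?N t * hp t) \<longlongrightarrow> 0 * hp 0) ?F"
      by (intro tendsto_intros dominated isCont_tendsto_within h)
    then show "((\<lambda>t. f1 t / ?N t) \<longlongrightarrow> 0) ?F"
      by (simp add: f1_def)
    have "(hm \<longlongrightarrow> hm 0) ?F"
      by (intro isCont_tendsto_within h)
    then show "((\<lambda>t. f2 t / ?N t) \<longlongrightarrow> 1) ?F"
      by (simp add: f2_def h(2))
    have "((\<lambda>t. exp (of_real \<rho>p * lg t) / ?N t * (of_real \<rho>p * hp t + t * hp' t))
        \<longlongrightarrow> 0 * (of_real \<rho>p * hp 0 + 0 * hp' 0)) ?F"
      by (intro tendsto_intros dominated isCont_tendsto_within h)
    moreover have "eventually (\<lambda>t. exp (of_real \<rho>p * lg t) / ?N t * (of_real \<rho>p * hp t + t * hp' t)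
        = t * f1' t / ?N t) ?F"
      using F by eventually_elim (auto simp: f1'_def lower_half_disc_def field_simps)
    ultimately show "((\<lambda>t. t * f1' t / ?N t) \<longlongrightarrow> 0) ?F"
      by (simp add: Lim_transform_eventually)
    have "((\<lambda>t. of_real \<rho>m * hm t + t * hm' t) \<longlongrightarrow> of_real \<rho>m * hm 0 + 0 * hm' 0) ?F"
      by (intro tendsto_intros isCont_tendsto_within h)
    moreover have "eventually (\<lambda>t. of_real \<rho>m * hm t + t * hm' t = t * f2' t / ?N t) ?F"
      using F by eventually_elim (auto simp: f2'_def lower_half_disc_def field_simps)
    ultimately show "((\<lambda>t. t * f2' t / ?N t) \<longlongrightarrow> of_real \<rho>m) ?F"
      using h(2) by (simp add: Lim_transform_eventually)
  qed
qed

lemma normalised_fundamental_system_distinct_exponents: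
  fixes A :: "complex \<Rightarrow> complex" and \<mu> :: real and S :: "complex set"
  assumes A: "A holomorphic_on ball 0 1" "A 0 = - of_real ((1 - \<mu>\<^sup>2) / 4)"
    and \<mu>: "\<mu> \<noteq> 0" "\<bar>\<mu>\<bar> < 1" and S: "open S" "lower_half_disc 1 \<subseteq> S"
  obtains r V N f1 f1' f2 f2' where "0 < r" "r \<le> 1" "open V" "connected V" "lower_half_disc r \<subseteq> V" "V \<subseteq> S"
    "normalised_fundamental_system (\<lambda>t. A t / t\<^sup>2) V (at 0 within lower_half_disc r) N
       (of_real ((1 - \<bar>\<mu>\<bar>) / 2)) f1 f1' f2 f2'"
proof -
  define \<rho>p \<rho>m where "\<rho>p = (1 + \<bar>\<mu>\<bar>) / 2" and "\<rho>m = (1 - \<bar>\<mu>\<bar>) / 2"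
  have \<rho>: "\<rho>p > 0" "\<rho>m > 0" "\<rho>m < \<rho>p" "\<rho>p + \<rho>m = 1"
    using \<mu> by (auto simp: \<rho>p_def \<rho>m_def field_simps)
  have "\<rho>p * (\<rho>p - 1) = - ((1 - \<mu>\<^sup>2) / 4)" "\<rho>m * (\<rho>m - 1) = - ((1 - \<mu>\<^sup>2) / 4)"
    by (simp_all add: \<rho>p_def \<rho>m_def field_simps power2_eq_square)
  then have indicial: "of_real (\<rho>p * (\<rho>p - 1)) = A 0" "of_real (\<rho>m * (\<rho>m - 1)) = A 0"
    by (simp_all add: A(2))
  obtain lg \<Omega> where \<Omega>: "open \<Omega>" "lower_half_disc 1 \<subseteq> \<Omega>" "log_branch_on lg \<Omega>"
    by (rule log_branch_lower_half_disc)
  obtain r1 hp hp' where hp: "0 < r1" "r1 \<le> 1" "hp 0 = 1" "isCont hp 0" "isCont hp' 0"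
      "hp holomorphic_on ball 0 r1"
    and sol_p: "\<And>V lg. V \<subseteq> ball 0 r1 \<Longrightarrow> log_branch_on lg V \<Longrightarrow>
       ode_solution (\<lambda>t. A t / t\<^sup>2) V (\<lambda>t. exp (of_real \<rho>p * lg t) * hp t)
         (\<lambda>t. exp (of_real \<rho>p * lg t) * (of_real \<rho>p * hp t / t + hp' t))"
    using frobenius_solution[OF A(1) \<rho>(1) indicial(1)] by blast
  obtain r2 hm hm' where hm: "0 < r2" "r2 \<le> 1" "hm 0 = 1" "isCont hm 0" "isCont hm' 0"
      "hm holomorphic_on ball 0 r2"
    and sol_m: "\<And>V lg. V \<subseteq> ball 0 r2 \<Longrightarrow> log_branch_on lg V \<Longrightarrow>
       ode_solution (\<lambda>t. A t / t\<^sup>2) V (\<lambda>t. exp (of_real \<rho>m * lg t) * hm t)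
         (\<lambda>t. exp (of_real \<rho>m * lg t) * (of_real \<rho>m * hm t / t + hm' t))"
    using frobenius_solution[OF A(1) \<rho>(2) indicial(2)] by blast
  define r where "r = min r1 r2"
  have r: "0 < r" "r \<le> 1"
    using hp hm by (auto simp: r_def)
  obtain V where V: "open V" "connected V" "lower_half_disc r \<subseteq> V" "V \<subseteq> (S \<inter> \<Omega>) \<inter> ball 0 r"
    using lower_half_disc_neighbourhood[of "S \<inter> \<Omega>" r] S \<Omega>(1,2) r by blast
  have lg: "log_branch_on lg V"
    by (rule log_branch_on_subset[OF \<Omega>(3)]) (use V(4) in auto)
  have "V \<subseteq> ball 0 r1" "V \<subseteq> ball 0 r2"
    using V(4) by (auto simp: r_def)
  then have "normalised_fundamental_system (\<lambda>t. A t / t\<^sup>2) V (at 0 within lower_half_disc r)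
      (\<lambda>t. exp (of_real \<rho>m * lg t)) (of_real \<rho>m)
      (\<lambda>t. exp (of_real \<rho>p * lg t) * hp t) (\<lambda>t. exp (of_real \<rho>p * lg t) * (of_real \<rho>p * hp t / t + hp' t))
      (\<lambda>t. exp (of_real \<rho>m * lg t) * hm t) (\<lambda>t. exp (of_real \<rho>m * lg t) * (of_real \<rho>m * hm t / t + hm' t))"
    using V r \<rho> hp hm by (intro normalised_fundamental_system_power_pair sol_p sol_m lg) auto
  then show ?thesis
    using that[OF r V(1-3)] V(4) unfolding \<rho>m_def by blast
qed

text \<open>The correction term Pr in the second solution f (log t + Pr t) of the logarithmic case.\<close>
lemma inverse_square_log_correction:
  fixes h :: "complex \<Rightarrow> complex"
  assumes h: "h holomorphic_on ball 0 r" "r > 0" "h 0 = 1"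
  obtains r' Pr where "0 < r'" "r' \<le> r" "isCont Pr 0" "\<And>t. t \<in> ball 0 r' \<Longrightarrow> h t \<noteq> 0"
    "\<And>t. t \<in> ball 0 r' - {0} \<Longrightarrow> (Pr has_field_derivative (inverse (h t ^ 2) - 1) / t) (at t)"
proof -
  have "open (ball 0 r \<inter> h -` (- {0}))"
    by (rule continuous_open_preimage[OF holomorphic_on_imp_continuous_on[OF h(1)]]) auto
  moreover have "0 \<in> ball 0 r \<inter> h -` (- {0})"
    using h by auto
  ultimately obtain d where d: "d > 0" "ball 0 d \<subseteq> ball 0 r \<inter> h -` (- {0})"
    by (meson open_contains_ball)
  define r' where "r' = min d r"
  have r': "0 < r'" "r' \<le> r"
    using d h by (auto simp: r'_def)
  have nonzero: "h t \<noteq> 0" if "t \<in> ball 0 r'" for t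
    using that d(2) by (auto simp: r'_def)
  define k where "k = (\<lambda>t. inverse (h t ^ 2))"
  have "k holomorphic_on ball 0 r'"
    unfolding k_def using nonzero r'(2)
    by (intro holomorphic_intros holomorphic_on_subset[OF h(1)]) auto
  define m where "m = (\<lambda>z. if z = 0 then deriv k 0 else (k z - k 0) / (z - 0))"
  have "m holomorphic_on ball 0 r'"
    unfolding m_def by (rule pole_lemma_open[OF \<open>k holomorphic_on ball 0 r'\<close> open_ball])
  then obtain Pr where "\<And>x. x \<in> ball 0 r' \<Longrightarrow> (Pr has_field_derivative m x) (at x within ball 0 r')"
    using holomorphic_convex_primitive'[OF convex_ball open_ball] by blast
  then have Pr: "(Pr has_field_derivative m x) (at x)" if "x \<in> ball 0 r'" for x
    using at_within_open[OF that open_ball] that by metis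
  show ?thesis
  proof (rule that[OF r'])
    show "isCont Pr 0"
      using Pr[of 0] r'(1) by (auto intro: DERIV_isCont)
    show "h t \<noteq> 0" if "t \<in> ball 0 r'" for t
      using nonzero that .
    show "(Pr has_field_derivative (inverse (h t ^ 2) - 1) / t) (at t)" if "t \<in> ball 0 r' - {0}" for t
      using Pr[of t] that h(3) by (simp add: m_def k_def)
  qed
qed

lemma exp_half_log_square:
  assumes "log_branch_on lg V" "t \<in> V"
  shows "exp (of_real (1 / 2) * lg t) * exp (of_real (1 / 2) * lg t) = t"
proof -
  have "exp (of_real (1 / 2) * lg t) * exp (of_real (1 / 2) * lg t) = exp ((of_real (1 / 2) + of_real (1 / 2)) * lg t)"
    by (simp add: exp_add[symmetric] algebra_simps)
  then show ?thesis
    using assms by (auto simp: log_branch_on_def)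
qed

lemma log_pair_second_solution:
  fixes Q lg h h' Pr :: "complex \<Rightarrow> complex"
  defines "f1 \<equiv> \<lambda>t. exp (of_real (1 / 2) * lg t) * h t"
    and "f1' \<equiv> \<lambda>t. exp (of_real (1 / 2) * lg t) * (of_real (1 / 2) * h t / t + h' t)"
  assumes lg: "log_branch_on lg V" and h: "\<And>t. t \<in> V \<Longrightarrow> h t \<noteq> 0"
    and Pr: "\<And>t. t \<in> V \<Longrightarrow> (Pr has_field_derivative (inverse (h t ^ 2) - 1) / t) (at t)"
    and sol: "ode_solution Q V f1 f1'"
  shows "ode_solution Q V (\<lambda>t. f1 t * (lg t + Pr t)) (\<lambda>t. f1' t * (lg t + Pr t) + inverse (f1 t))"
    and "\<And>t. t \<in> V \<Longrightarrow> f1 t * (f1' t * (lg t + Pr t) + inverse (f1 t)) - f1' t * (f1 t * (lg t + Pr t)) = 1"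
proof -
  have "f1 t \<noteq> 0 \<and> ((\<lambda>t. lg t + Pr t) has_field_derivative inverse (f1 t ^ 2)) (at t)" if "t \<in> V" for t
  proof -
    have "t \<noteq> 0" "((\<lambda>t. lg t + Pr t) has_field_derivative 1 / t + (inverse (h t ^ 2) - 1) / t) (at t)"
      using lg that Pr by (auto intro!: DERIV_add simp: log_branch_on_def)
    moreover have "f1 t ^ 2 = t * h t ^ 2"
      using exp_half_log_square[OF lg that] by (simp add: f1_def power2_eq_square algebra_simps)
    ultimately show ?thesis
      using h[OF that] by (auto simp: f1_def field_simps)
  qed
  then show "ode_solution Q V (\<lambda>t. f1 t * (lg t + Pr t)) (\<lambda>t. f1' t * (lg t + Pr t) + inverse (f1 t))"
    and "\<And>t. t \<in> V \<Longrightarrow> f1 t * (f1' t * (lg t + Pr t) + inverse (f1 t)) - f1' t * (f1 t * (lg t + Pr t)) = 1"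
    by (rule ode_solution_reduction_of_order[OF sol], blast)+
qed

lemma log_pair_quotients:
  fixes p t h h' P l :: complex
  assumes "t = p * p" "p \<noteq> 0" "h \<noteq> 0" "l \<noteq> 0"
  shows "p * h / (p * l) = h * inverse l"
    and "p * h * (l + P) / (p * l) = h * (1 + P * inverse l)"
    and "t * (p * (of_real (1 / 2) * h / t + h')) / (p * l) = (of_real (1 / 2) * h + t * h') * inverse l"
    and "t * (p * (of_real (1 / 2) * h / t + h') * (l + P) + inverse (p * h)) / (p * l)
      = (of_real (1 / 2) * h + t * h') * (1 + P * inverse l) + inverse h * inverse l"
  using assms by (simp_all add: field_simps)

lemma eventually_log_nonzero_at_lower_half_disc:
  assumes "lower_half_disc r \<subseteq> V" "r \<le> 1" "log_branch_on lg V"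
  shows "eventually (\<lambda>t. t \<in> V \<and> lg t \<noteq> 0) (at 0 within lower_half_disc r)"
  using eventually_at_within_lower_half_disc[OF assms(1)]
proof eventually_elim
  case (elim t)
  moreover have "lg t \<noteq> 0"
  proof
    assume "lg t = 0"
    then have "t = 1"
      using elim assms(3) by (auto simp: log_branch_on_def)
    then show False
      using elim assms(2) by (simp add: lower_half_disc_def)
  qed
  ultimately show ?case by simp
qed

lemma normalised_fundamental_system_log_pair:
  fixes Q lg h h' Pr :: "complex \<Rightarrow> complex" and r :: real
  defines "f1 \<equiv> \<lambda>t. exp (of_real (1 / 2) * lg t) * h t"
    and "f1' \<equiv> \<lambda>t. exp (of_real (1 / 2) * lg t) * (of_real (1 / 2) * h t / t + h' t)"
  assumes V: "lower_half_disc r \<subseteq> V" "r \<le> 1" and lg: "log_branch_on lg V"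
    and h: "h 0 = 1" "isCont h 0" "isCont h' 0" "\<And>t. t \<in> V \<Longrightarrow> h t \<noteq> 0"
    and Pr: "isCont Pr 0" "\<And>t. t \<in> V \<Longrightarrow> (Pr has_field_derivative (inverse (h t ^ 2) - 1) / t) (at t)"
    and sol: "ode_solution Q V f1 f1'"
  shows "normalised_fundamental_system Q V (at 0 within lower_half_disc r)
     (\<lambda>t. exp (of_real (1 / 2) * lg t) * lg t) (1 / 2)
     f1 f1' (\<lambda>t. f1 t * (lg t + Pr t)) (\<lambda>t. f1' t * (lg t + Pr t) + inverse (f1 t))"
proof -
  let ?F = "at 0 within lower_half_disc r"
  let ?P = "\<lambda>t. exp (of_real (1 / 2) * lg t)"
  have second: "ode_solution Q V (\<lambda>t. f1 t * (lg t + Pr t)) (\<lambda>t. f1' t * (lg t + Pr t) + inverse (f1 t))"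
    "\<And>t. t \<in> V \<Longrightarrow> f1 t * (f1' t * (lg t + Pr t) + inverse (f1 t)) - f1' t * (f1 t * (lg t + Pr t)) = 1"
    using log_pair_second_solution[OF lg h(4) Pr(2) sol[unfolded f1_def f1'_def]]
    unfolding f1_def f1'_def by blast+
  have "f1 t / (?P t * lg t) = h t * inverse (lg t)"
    "f1 t * (lg t + Pr t) / (?P t * lg t) = h t * (1 + Pr t * inverse (lg t))"
    "t * f1' t / (?P t * lg t) = (of_real (1 / 2) * h t + t * h' t) * inverse (lg t)"
    "t * (f1' t * (lg t + Pr t) + inverse (f1 t)) / (?P t * lg t)
      = (of_real (1 / 2) * h t + t * h' t) * (1 + Pr t * inverse (lg t)) + inverse (h t) * inverse (lg t)"
    if "t \<in> V \<and> lg t \<noteq> 0" for t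
    unfolding f1_def f1'_def using that
    by (intro log_pair_quotients[OF sym[OF exp_half_log_square[OF lg]] exp_not_eq_zero h(4)]; simp)+
  then have quotients: "eventually (\<lambda>t. f1 t / (?P t * lg t) = h t * inverse (lg t)) ?F"
    "eventually (\<lambda>t. f1 t * (lg t + Pr t) / (?P t * lg t) = h t * (1 + Pr t * inverse (lg t))) ?F"
    "eventually (\<lambda>t. t * f1' t / (?P t * lg t) = (of_real (1 / 2) * h t + t * h' t) * inverse (lg t)) ?F"
    "eventually (\<lambda>t. t * (f1' t * (lg t + Pr t) + inverse (f1 t)) / (?P t * lg t)
      = (of_real (1 / 2) * h t + t * h' t) * (1 + Pr t * inverse (lg t)) + inverse (h t) * inverse (lg t)) ?F"
    using eventually_log_nonzero_at_lower_half_disc[OF V lg] by (auto elim: eventually_mono)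
  have inverse_log: "((\<lambda>t. inverse (lg t)) \<longlongrightarrow> 0) ?F"
    using lg V(1) by (intro tendsto_inverse_log_zero) (auto simp: log_branch_on_def)
  have "(h \<longlongrightarrow> h 0) ?F" "(h' \<longlongrightarrow> h' 0) ?F" "(Pr \<longlongrightarrow> Pr 0) ?F"
    using h(2,3) Pr(1) by (simp_all add: isCont_tendsto_within)
  note limit_intros = tendsto_intros inverse_log this
  have lim: "((\<lambda>t. h t * inverse (lg t)) \<longlongrightarrow> h 0 * 0) ?F"
    "((\<lambda>t. h t * (1 + Pr t * inverse (lg t))) \<longlongrightarrow> h 0 * (1 + Pr 0 * 0)) ?F"
    "((\<lambda>t. (of_real (1 / 2) * h t + t * h' t) * inverse (lg t))
      \<longlongrightarrow> (of_real (1 / 2) * h 0 + 0 * h' 0) * 0) ?F"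
    "((\<lambda>t. (of_real (1 / 2) * h t + t * h' t) * (1 + Pr t * inverse (lg t)) + inverse (h t) * inverse (lg t))
      \<longlongrightarrow> (of_real (1 / 2) * h 0 + 0 * h' 0) * (1 + Pr 0 * 0) + inverse (h 0) * 0) ?F"
    using h(1) by (intro limit_intros; simp)+
  show ?thesis
    unfolding normalised_fundamental_system_def
  proof (intro conjI sol second exI[of _ 1] ballI)
    show "(1::complex) \<noteq> 0"
      by simp
    show "((\<lambda>t. f1 t / (?P t * lg t)) \<longlongrightarrow> 0) ?F"
      unfolding tendsto_cong[OF quotients(1)] using lim(1) by simp
    show "((\<lambda>t. f1 t * (lg t + Pr t) / (?P t * lg t)) \<longlongrightarrow> 1) ?F"
      unfolding tendsto_cong[OF quotients(2)] using lim(2) h(1) by simp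
    show "((\<lambda>t. t * f1' t / (?P t * lg t)) \<longlongrightarrow> 0) ?F"
      unfolding tendsto_cong[OF quotients(3)] using lim(3) by simp
    show "((\<lambda>t. t * (f1' t * (lg t + Pr t) + inverse (f1 t)) / (?P t * lg t)) \<longlongrightarrow> 1 / 2) ?F"
      unfolding tendsto_cong[OF quotients(4)] using lim(4) h(1) by simp
  qed
qed

lemma normalised_fundamental_system_equal_exponents:
  fixes A :: "complex \<Rightarrow> complex" and S :: "complex set"
  assumes A: "A holomorphic_on ball 0 1" "A 0 = - 1 / 4" and S: "open S" "lower_half_disc 1 \<subseteq> S"
  obtains r V N f1 f1' f2 f2' where "0 < r" "r \<le> 1" "open V" "connected V" "lower_half_disc r \<subseteq> V" "V \<subseteq> S"
    "normalised_fundamental_system (\<lambda>t. A t / t\<^sup>2) V (at 0 within lower_half_disc r) N (1 / 2) f1 f1' f2 f2'"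
proof -
  have indicial: "of_real (1 / 2 * (1 / 2 - 1)) = A 0"
    using A(2) by simp
  obtain lg \<Omega> where \<Omega>: "open \<Omega>" "lower_half_disc 1 \<subseteq> \<Omega>" "log_branch_on lg \<Omega>"
    by (rule log_branch_lower_half_disc)
  obtain r1 h h' where h: "0 < r1" "r1 \<le> 1" "h 0 = 1" "isCont h 0" "isCont h' 0" "h holomorphic_on ball 0 r1"
    and sol: "\<And>V lg. V \<subseteq> ball 0 r1 \<Longrightarrow> log_branch_on lg V \<Longrightarrow>
       ode_solution (\<lambda>t. A t / t\<^sup>2) V (\<lambda>t. exp (of_real (1 / 2) * lg t) * h t)
         (\<lambda>t. exp (of_real (1 / 2) * lg t) * (of_real (1 / 2) * h t / t + h' t))"
    using frobenius_solution[OF A(1) _ indicial] half_gt_zero[OF zero_less_one] by blast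
  obtain r Pr where r: "0 < r" "r \<le> r1" and Pr: "isCont Pr 0" "\<And>t. t \<in> ball 0 r \<Longrightarrow> h t \<noteq> 0"
      "\<And>t. t \<in> ball 0 r - {0} \<Longrightarrow> (Pr has_field_derivative (inverse (h t ^ 2) - 1) / t) (at t)"
    using inverse_square_log_correction[OF h(6,1,3)] by blast
  have "r \<le> 1"
    using r h(2) by simp
  obtain V where V: "open V" "connected V" "lower_half_disc r \<subseteq> V" "V \<subseteq> (S \<inter> \<Omega>) \<inter> ball 0 r"
    using lower_half_disc_neighbourhood[of "S \<inter> \<Omega>" r] S \<Omega>(1,2) r(1) \<open>r \<le> 1\<close> by blast
  have lg: "log_branch_on lg V"
    by (rule log_branch_on_subset[OF \<Omega>(3)]) (use V(4) in auto)
  then have "0 \<notin> V"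
    by (auto simp: log_branch_on_def)
  then have Vr: "t \<in> ball 0 r - {0}" if "t \<in> V" for t
    using that V(4) by auto
  have "V \<subseteq> ball 0 r1"
    using V(4) r(2) by auto
  have "normalised_fundamental_system (\<lambda>t. A t / t\<^sup>2) V (at 0 within lower_half_disc r)
      (\<lambda>t. exp (of_real (1 / 2) * lg t) * lg t) (1 / 2)
      (\<lambda>t. exp (of_real (1 / 2) * lg t) * h t)
      (\<lambda>t. exp (of_real (1 / 2) * lg t) * (of_real (1 / 2) * h t / t + h' t))
      (\<lambda>t. exp (of_real (1 / 2) * lg t) * h t * (lg t + Pr t))
      (\<lambda>t. exp (of_real (1 / 2) * lg t) * (of_real (1 / 2) * h t / t + h' t) * (lg t + Pr t)
         + inverse (exp (of_real (1 / 2) * lg t) * h t))"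
    by (rule normalised_fundamental_system_log_pair[OF V(3) \<open>r \<le> 1\<close> lg h(3,4,5)
          Pr(2)[OF DiffD1[OF Vr]] Pr(1) Pr(3)[OF Vr] sol[OF \<open>V \<subseteq> ball 0 r1\<close> lg]])
  from that[OF r(1) \<open>r \<le> 1\<close> V(1-3) _ this] V(4) show ?thesis
    by auto
qed

lemma regular_singular_point_limits:
  fixes A v0 v0' v1 v1' :: "complex \<Rightarrow> complex" and \<mu> :: real and S :: "complex set"
  assumes A: "A holomorphic_on ball 0 1" "A 0 = - of_real ((1 - \<mu>\<^sup>2) / 4)" and \<mu>: "\<bar>\<mu>\<bar> < 1"
    and S: "open S" "lower_half_disc 1 \<subseteq> S"
    and v: "ode_solution (\<lambda>t. A t / t\<^sup>2) S v0 v0'" "ode_solution (\<lambda>t. A t / t\<^sup>2) S v1 v1'"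
    and W: "\<And>t. t \<in> lower_half_disc 1 \<Longrightarrow> v0 t * v1' t - v0' t * v1 t \<noteq> 0"
  obtains N p0 p1 where "(p0, p1) \<noteq> (0, 0)"
    "((\<lambda>t. v0 t / N t) \<longlongrightarrow> p0) (at 0 within lower_half_disc 1)"
    "((\<lambda>t. v1 t / N t) \<longlongrightarrow> p1) (at 0 within lower_half_disc 1)"
    "((\<lambda>t. t * v0' t / N t) \<longlongrightarrow> of_real ((1 - \<bar>\<mu>\<bar>) / 2) * p0) (at 0 within lower_half_disc 1)"
    "((\<lambda>t. t * v1' t / N t) \<longlongrightarrow> of_real ((1 - \<bar>\<mu>\<bar>) / 2) * p1) (at 0 within lower_half_disc 1)"
proof -
  obtain r V N f1 f1' f2 f2' where r: "0 < r" "r \<le> 1"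
    and V: "open V" "connected V" "lower_half_disc r \<subseteq> V" "V \<subseteq> S"
    and fs: "normalised_fundamental_system (\<lambda>t. A t / t\<^sup>2) V (at 0 within lower_half_disc r) N
      (of_real ((1 - \<bar>\<mu>\<bar>) / 2)) f1 f1' f2 f2'"
  proof (cases "\<mu> = 0")
    case True
    then have "A 0 = - 1 / 4"
      using A(2) by simp
    then obtain r V N f1 f1' f2 f2' where "0 < r" "r \<le> 1" "open V" "connected V"
        "lower_half_disc r \<subseteq> V" "V \<subseteq> S"
        "normalised_fundamental_system (\<lambda>t. A t / t\<^sup>2) V (at 0 within lower_half_disc r) N (1 / 2) f1 f1' f2 f2'"
      by (rule normalised_fundamental_system_equal_exponents[OF A(1) _ S])
    moreover have "of_real ((1 - \<bar>\<mu>\<bar>) / 2) = (1 / 2 :: complex)"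
      using True by simp
    ultimately show ?thesis
      using that[of r V N f1 f1' f2 f2'] by simp
  next
    case False
    show ?thesis
      by (rule normalised_fundamental_system_distinct_exponents[OF A False \<mu> S]) (rule that)
  qed
  let ?x = "- \<i> * of_real (r / 2)"
  have x: "?x \<in> V" "v0 ?x * v1' ?x - v0' ?x * v1 ?x \<noteq> 0"
    using lower_half_disc_nonempty[OF r(1)] V(3) W lower_half_disc_mono[OF r(2)] by auto
  have "eventually (\<lambda>t. t \<in> V) (at 0 within lower_half_disc r)"
    using eventually_at_within_lower_half_disc[OF V(3)] by eventually_elim simp
  from normalised_fundamental_system_limits[OF V(1,2) this fs
      ode_solution_subset[OF v(1) V(4)] ode_solution_subset[OF v(2) V(4)] x]
  show ?thesis
    using that unfolding at_within_lower_half_disc_shrink[OF r] by blast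
qed

section \<open>Projective limits on the upper half plane\<close>

lemma ode_solution_cong:
  "(\<And>t. t \<in> V \<Longrightarrow> Q t = Q' t) \<Longrightarrow> ode_solution Q V f f' \<Longrightarrow> ode_solution Q' V f f'"
  by (simp add: ode_solution_def)

lemma chordal_mult_left:
  assumes "g \<noteq> 0"
  shows "chordal (g * x, g * y) p = chordal (x, y) p"
proof -
  have "norm (g * x * snd p - g * y * fst p) = norm g * norm (x * snd p - y * fst p)"
    by (metis norm_mult mult.assoc right_diff_distrib)
  moreover have "(cmod (g * x))\<^sup>2 + (cmod (g * y))\<^sup>2 = (norm g)\<^sup>2 * ((cmod x)\<^sup>2 + (cmod y)\<^sup>2)"
    by (simp add: norm_mult algebra_simps)
  ultimately show ?thesis
    unfolding chordal_def using assms by (simp add: real_sqrt_mult)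
qed

lemma P1_tendsto_of_rescaled_limits:
  assumes lim: "(h0 \<longlongrightarrow> a) F" "(h1 \<longlongrightarrow> b) F" and ab: "(a, b) \<noteq> (0, 0)"
    and rescaled: "eventually (\<lambda>x. h0 x = g x * f0 x \<and> h1 x = g x * f1 x) F"
  shows "P1_tendsto (\<lambda>x. (f0 x, f1 x)) (a, b) F"
  unfolding P1_tendsto_def
proof (intro conjI ab)
  have "eventually (\<lambda>x. h0 x \<noteq> 0 \<or> h1 x \<noteq> 0) F"
  proof (cases "a = 0")
    case False
    show ?thesis
      using tendsto_imp_eventually_ne[OF lim(1) False] by eventually_elim simp
  next
    case True
    then have "b \<noteq> 0"
      using ab by simp
    from tendsto_imp_eventually_ne[OF lim(2) this] show ?thesis
      by eventually_elim simp
  qed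
  then have scale: "eventually (\<lambda>x. chordal (h0 x, h1 x) (a, b) = chordal (f0 x, f1 x) (a, b)) F"
    using rescaled by eventually_elim (auto simp: chordal_mult_left)
  have "((\<lambda>x. chordal (h0 x, h1 x) (a, b)) \<longlongrightarrow>
      cmod (a * b - b * a) / (sqrt ((cmod a)\<^sup>2 + (cmod b)\<^sup>2) * sqrt ((cmod a)\<^sup>2 + (cmod b)\<^sup>2))) F"
    unfolding chordal_def fst_conv snd_conv using ab by (intro tendsto_intros lim) auto
  then have "((\<lambda>x. chordal (h0 x, h1 x) (a, b)) \<longlongrightarrow> 0) F"
    by (simp add: mult.commute)
  then show "((\<lambda>x. chordal (f0 x, f1 x) (a, b)) \<longlongrightarrow> 0) F"
    using scale by (rule Lim_transform_eventually)
qed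

lemma connected_Xplus: "connected Xplus"
proof -
  have "Xplus = {z. 0 \<le> Im z} - {0, 1}"
    by (auto simp: Xplus_def)
  also have "connected \<dots>"
    by (rule connected_convex_minus_real_points[where a = \<i>]) (auto intro: convex_halfspace_Im_ge)
  finally show ?thesis .
qed

lemma wronskian_nonzero_on_Xplus:
  assumes U: "open U" "Xplus \<subseteq> U" and u: "ode_solution Q U u0 u0'" "ode_solution Q U u1 u1'"
    and independent: "\<forall>k0 k1. (\<forall>x\<in>Xplus. k0 * u0 x + k1 * u1 x = 0) \<longrightarrow> k0 = 0 \<and> k1 = 0"
    and x: "x \<in> Xplus"
  shows "u0 x * u1' x - u0' x * u1 x \<noteq> 0"
proof
  assume W: "u0 x * u1' x - u0' x * u1 x = 0"
  have "Xplus \<noteq> {}"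
    using x by blast
  then obtain V where V: "open V" "connected V" "Xplus \<subseteq> V" "V \<subseteq> U"
    using connected_open_superset[OF U(1) connected_Xplus U(2)] by blast
  obtain k0 k1 where "(k0, k1) \<noteq> (0, 0)" "\<And>y. y \<in> V \<Longrightarrow> k0 * u0 y + k1 * u1 y = 0"
    using ode_solutions_dependent_of_wronskian_zero[OF V(1,2) ode_solution_subset[OF u(1) V(4)]
        ode_solution_subset[OF u(2) V(4)]] x V(3) W by blast
  then show False
    using independent V(3) by blast
qed

lemma filterlim_reflect_at_Xplus:
  assumes "x0 \<in> {0, 1}"
  shows "filterlim (\<lambda>x. x0 - x) (at 0 within lower_half_disc 1) (at x0 within Xplus)"
  unfolding filterlim_at
proof
  show "\<forall>\<^sub>F x in at x0 within Xplus. x0 - x \<in> lower_half_disc 1 \<and> x0 - x \<noteq> 0"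
    unfolding eventually_at using assms
    by (intro exI[of _ 1]) (auto simp: Xplus_def lower_half_disc_def dist_norm norm_minus_commute)
  show "((\<lambda>x. x0 - x) \<longlongrightarrow> 0) (at x0 within Xplus)"
    by (auto intro!: tendsto_eq_intros)
qed

lemma filterlim_inverse_at_infinity_Xplus:
  "filterlim inverse (at 0 within lower_half_disc 1) (inf at_infinity (principal Xplus))"
  unfolding filterlim_at
proof
  show "\<forall>\<^sub>F x in inf at_infinity (principal Xplus). inverse x \<in> lower_half_disc 1 \<and> inverse x \<noteq> 0"
    unfolding eventually_inf_principal eventually_at_infinity
  proof (intro exI[of _ 2] allI impI)
    fix x :: complex assume x: "2 \<le> norm x" "x \<in> Xplus"
    then have "norm (inverse x) < 1"
      by (simp add: norm_inverse inverse_less_1_iff)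
    with x show "inverse x \<in> lower_half_disc 1 \<and> inverse x \<noteq> 0"
      by (auto simp: Xplus_def lower_half_disc_def divide_nonpos_nonneg)
  qed
  show "(inverse \<longlongrightarrow> 0) (inf at_infinity (principal Xplus))"
    by (rule tendsto_mono[OF inf_le1 tendsto_inverse_0])
qed

lemma P1_limits_at_reflection:
  fixes u0 u0' u1 u1' N :: "complex \<Rightarrow> complex" and x0 \<kappa> :: complex
  assumes x0: "x0 \<in> {0, 1}" and \<kappa>: "\<kappa> \<noteq> 0" and p: "(p0, p1) \<noteq> (0, 0)"
    and lim: "((\<lambda>t. u0 (x0 - t) / N t) \<longlongrightarrow> p0) (at 0 within lower_half_disc 1)"
      "((\<lambda>t. u1 (x0 - t) / N t) \<longlongrightarrow> p1) (at 0 within lower_half_disc 1)"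
      "((\<lambda>t. t * - u0' (x0 - t) / N t) \<longlongrightarrow> \<kappa> * p0) (at 0 within lower_half_disc 1)"
      "((\<lambda>t. t * - u1' (x0 - t) / N t) \<longlongrightarrow> \<kappa> * p1) (at 0 within lower_half_disc 1)"
  shows "P1_tendsto (\<lambda>x. (u0 x, u1 x)) (p0, p1) (at x0 within Xplus)
    \<and> P1_tendsto (\<lambda>x. (u0' x, u1' x)) (p0, p1) (at x0 within Xplus)"
proof
  note reflect = filterlim_compose[OF _ filterlim_reflect_at_Xplus[OF x0]]
  show "P1_tendsto (\<lambda>x. (u0 x, u1 x)) (p0, p1) (at x0 within Xplus)"
    by (rule P1_tendsto_of_rescaled_limits[OF reflect[OF lim(1)] reflect[OF lim(2)] p,
          where g = "\<lambda>x. inverse (N (x0 - x))"]) (simp add: divide_inverse mult.commute)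
  show "P1_tendsto (\<lambda>x. (u0' x, u1' x)) (p0, p1) (at x0 within Xplus)"
  proof (rule P1_tendsto_of_rescaled_limits[OF _ _ p, where g = "\<lambda>x. - (x0 - x) / N (x0 - x) / \<kappa>"])
    show "((\<lambda>x. (x0 - x) * - u0' x / N (x0 - x) / \<kappa>) \<longlongrightarrow> p0) (at x0 within Xplus)"
      "((\<lambda>x. (x0 - x) * - u1' x / N (x0 - x) / \<kappa>) \<longlongrightarrow> p1) (at x0 within Xplus)"
      using tendsto_divide[OF reflect[OF lim(3)] tendsto_const \<kappa>]
        tendsto_divide[OF reflect[OF lim(4)] tendsto_const \<kappa>] \<kappa>
      by simp_all
  qed (simp add: divide_inverse algebra_simps)
qed

text \<open>With t = 1/x and v(t) = t u(1/t), the derivative is u'(x) = v(t) - t v'(t).\<close>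
lemma tendsto_inverted_derivative:
  fixes u u' N :: "complex \<Rightarrow> complex" and \<kappa> p :: complex and X :: "complex set"
  assumes \<kappa>: "\<kappa> \<noteq> 1"
    and lim: "((\<lambda>t. t * u (inverse t) / N t) \<longlongrightarrow> p) (at 0 within X)"
      "((\<lambda>t. t * (u (inverse t) - u' (inverse t) / t) / N t) \<longlongrightarrow> \<kappa> * p) (at 0 within X)"
  shows "((\<lambda>t. u' (inverse t) / (N t * (1 - \<kappa>))) \<longlongrightarrow> p) (at 0 within X)"
proof -
  have nonzero: "1 - \<kappa> \<noteq> 0"
    using \<kappa> by simp
  then have "(p - \<kappa> * p) / (1 - \<kappa>) = p"
    by (simp add: field_simps)
  then have "((\<lambda>t. (t * u (inverse t) / N t - t * (u (inverse t) - u' (inverse t) / t) / N t) / (1 - \<kappa>))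
      \<longlongrightarrow> p) (at 0 within X)"
    using tendsto_divide[OF tendsto_diff[OF lim] tendsto_const nonzero] by (simp only:)
  moreover have "eventually (\<lambda>t. (t * u (inverse t) / N t - t * (u (inverse t) - u' (inverse t) / t) / N t)
      / (1 - \<kappa>) = u' (inverse t) / (N t * (1 - \<kappa>))) (at 0 within X)"
    unfolding eventually_at_filter
  proof (intro always_eventually allI impI)
    fix t :: complex assume "t \<noteq> 0"
    then have "t * (u (inverse t) - u' (inverse t) / t) = t * u (inverse t) - u' (inverse t)"
      by (simp add: right_diff_distrib)
    then show "(t * u (inverse t) / N t - t * (u (inverse t) - u' (inverse t) / t) / N t) / (1 - \<kappa>)
        = u' (inverse t) / (N t * (1 - \<kappa>))"
      by (simp add: diff_divide_distrib[symmetric])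
  qed
  ultimately show ?thesis
    by (rule Lim_transform_eventually)
qed

lemma P1_limits_at_inversion:
  fixes u0 u0' u1 u1' N :: "complex \<Rightarrow> complex" and \<kappa> :: complex
  assumes \<kappa>: "\<kappa> \<noteq> 1" and p: "(p0, p1) \<noteq> (0, 0)"
    and lim: "((\<lambda>t. t * u0 (inverse t) / N t) \<longlongrightarrow> p0) (at 0 within lower_half_disc 1)"
      "((\<lambda>t. t * u1 (inverse t) / N t) \<longlongrightarrow> p1) (at 0 within lower_half_disc 1)"
      "((\<lambda>t. t * (u0 (inverse t) - u0' (inverse t) / t) / N t) \<longlongrightarrow> \<kappa> * p0) (at 0 within lower_half_disc 1)"
      "((\<lambda>t. t * (u1 (inverse t) - u1' (inverse t) / t) / N t) \<longlongrightarrow> \<kappa> * p1) (at 0 within lower_half_disc 1)"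
  shows "P1_tendsto (\<lambda>x. (u0 x, u1 x)) (p0, p1) (inf at_infinity (principal Xplus))
    \<and> P1_tendsto (\<lambda>x. (u0' x, u1' x)) (p0, p1) (inf at_infinity (principal Xplus))"
proof
  note invert = filterlim_compose[OF _ filterlim_inverse_at_infinity_Xplus]
  show "P1_tendsto (\<lambda>x. (u0 x, u1 x)) (p0, p1) (inf at_infinity (principal Xplus))"
    by (rule P1_tendsto_of_rescaled_limits[OF invert[OF lim(1)] invert[OF lim(2)] p,
          where g = "\<lambda>x. inverse x / N (inverse x)"]) (simp add: divide_inverse mult_ac)
  show "P1_tendsto (\<lambda>x. (u0' x, u1' x)) (p0, p1) (inf at_infinity (principal Xplus))"
    by (rule P1_tendsto_of_rescaled_limits[OF invert[OF tendsto_inverted_derivative[OF \<kappa> lim(1,3)]]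
          invert[OF tendsto_inverted_derivative[OF \<kappa> lim(2,4)]] p,
          where g = "\<lambda>x. inverse (N (inverse x) * (1 - \<kappa>))"]) (simp add: divide_inverse mult.commute)
qed

lemma finite_singular_point_limits:
  fixes Q A u0 u0' u1 u1' :: "complex \<Rightarrow> complex" and x0 :: complex and \<mu> :: real
  assumes x0: "x0 \<in> {0, 1}" and U: "open U" "Xplus \<subseteq> U"
    and u: "ode_solution Q U u0 u0'" "ode_solution Q U u1 u1'"
    and W: "\<And>x. x \<in> Xplus \<Longrightarrow> u0 x * u1' x - u0' x * u1 x \<noteq> 0"
    and A: "A holomorphic_on ball 0 1" "A 0 = - of_real ((1 - \<mu>\<^sup>2) / 4)" "\<bar>\<mu>\<bar> < 1"
    and Q: "\<And>t. t \<in> ball 0 1 - {0} \<Longrightarrow> Q (x0 - t) = A t / t\<^sup>2"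
  shows "\<exists>p. P1_tendsto (\<lambda>x. (u0 x, u1 x)) p (at x0 within Xplus)
          \<and> P1_tendsto (\<lambda>x. (u0' x, u1' x)) p (at x0 within Xplus)"
proof -
  define S where "S = (ball 0 1 - {0}) \<inter> (\<lambda>t. x0 - t) -` U"
  have reflected: "x0 - t \<in> Xplus" if "t \<in> lower_half_disc 1" for t
    using that x0 by (auto simp: Xplus_def lower_half_disc_def minus_equation_iff)
  have S: "open S" "lower_half_disc 1 \<subseteq> S"
  proof -
    show "open S"
      unfolding S_def using U(1) by (intro open_Int open_Diff open_ball continuous_open_vimage continuous_intros) auto
    show "lower_half_disc 1 \<subseteq> S"
      using U(2) reflected by (auto simp: S_def lower_half_disc_def)
  qed
  have v: "ode_solution (\<lambda>t. A t / t\<^sup>2) S (\<lambda>t. u (x0 - t)) (\<lambda>t. - u' (x0 - t))"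
    if "ode_solution Q U u u'" for u u'
  proof (rule ode_solution_cong)
    show "ode_solution (\<lambda>t. Q (x0 - t)) S (\<lambda>t. u (x0 - t)) (\<lambda>t. - u' (x0 - t))"
      using ode_solution_reflect[OF that] by (rule ode_solution_subset) (auto simp: S_def)
    show "Q (x0 - t) = A t / t\<^sup>2" if "t \<in> S" for t
      using Q that by (auto simp: S_def)
  qed
  have "u0 (x0 - t) * - u1' (x0 - t) - - u0' (x0 - t) * u1 (x0 - t) \<noteq> 0" if "t \<in> lower_half_disc 1" for t
    using W[OF reflected[OF that]] by (simp add: algebra_simps)
  then obtain N p0 p1 where p: "(p0, p1) \<noteq> (0, 0)"
    and lim: "((\<lambda>t. u0 (x0 - t) / N t) \<longlongrightarrow> p0) (at 0 within lower_half_disc 1)"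
    "((\<lambda>t. u1 (x0 - t) / N t) \<longlongrightarrow> p1) (at 0 within lower_half_disc 1)"
    "((\<lambda>t. t * - u0' (x0 - t) / N t) \<longlongrightarrow> of_real ((1 - \<bar>\<mu>\<bar>) / 2) * p0) (at 0 within lower_half_disc 1)"
    "((\<lambda>t. t * - u1' (x0 - t) / N t) \<longlongrightarrow> of_real ((1 - \<bar>\<mu>\<bar>) / 2) * p1) (at 0 within lower_half_disc 1)"
    by (rule regular_singular_point_limits[OF A S v[OF u(1)] v[OF u(2)]])
  have "of_real ((1 - \<bar>\<mu>\<bar>) / 2) \<noteq> (0 :: complex)"
    using A(3) by simp
  from P1_limits_at_reflection[OF x0 this p lim] show ?thesis
    by blast
qed

lemma infinite_singular_point_limits:
  fixes Q A u0 u0' u1 u1' :: "complex \<Rightarrow> complex" and \<mu> :: real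
  assumes U: "open U" "Xplus \<subseteq> U"
    and u: "ode_solution Q U u0 u0'" "ode_solution Q U u1 u1'"
    and W: "\<And>x. x \<in> Xplus \<Longrightarrow> u0 x * u1' x - u0' x * u1 x \<noteq> 0"
    and A: "A holomorphic_on ball 0 1" "A 0 = - of_real ((1 - \<mu>\<^sup>2) / 4)" "\<bar>\<mu>\<bar> < 1"
    and Q: "\<And>t. t \<in> ball 0 1 - {0} \<Longrightarrow> Q (inverse t) / t ^ 4 = A t / t\<^sup>2"
  shows "\<exists>p. P1_tendsto (\<lambda>x. (u0 x, u1 x)) p (inf at_infinity (principal Xplus))
          \<and> P1_tendsto (\<lambda>x. (u0' x, u1' x)) p (inf at_infinity (principal Xplus))"
proof -
  define S where "S = (ball 0 1 - {0}) \<inter> inverse -` U"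
  have inverted: "inverse t \<in> Xplus" if "t \<in> lower_half_disc 1" for t
  proof -
    have "t \<noteq> 0" "cmod t < 1" "Im t \<le> 0"
      using that by (auto simp: lower_half_disc_def)
    then show ?thesis
      by (auto simp: Xplus_def divide_nonpos_nonneg)
  qed
  have S: "open S" "lower_half_disc 1 \<subseteq> S"
  proof -
    show "open S"
      unfolding S_def by (rule continuous_open_preimage[OF _ _ U(1)]) (auto intro: continuous_intros)
    show "lower_half_disc 1 \<subseteq> S"
      using U(2) inverted by (auto simp: S_def lower_half_disc_def)
  qed
  have v: "ode_solution (\<lambda>t. A t / t\<^sup>2) S (\<lambda>t. t * u (inverse t)) (\<lambda>t. u (inverse t) - u' (inverse t) / t)"
    if "ode_solution Q U u u'" for u u'
  proof (rule ode_solution_cong)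
    show "ode_solution (\<lambda>t. Q (inverse t) / t ^ 4) S (\<lambda>t. t * u (inverse t)) (\<lambda>t. u (inverse t) - u' (inverse t) / t)"
      using ode_solution_inversion[OF that] by (rule ode_solution_subset) (auto simp: S_def)
    show "Q (inverse t) / t ^ 4 = A t / t\<^sup>2" if "t \<in> S" for t
      using Q that by (auto simp: S_def)
  qed
  have "t * u0 (inverse t) * (u1 (inverse t) - u1' (inverse t) / t)
      - (u0 (inverse t) - u0' (inverse t) / t) * (t * u1 (inverse t))
      = - (u0 (inverse t) * u1' (inverse t) - u0' (inverse t) * u1 (inverse t))"
    if "t \<in> lower_half_disc 1" for t
    using that by (simp add: lower_half_disc_def field_simps)
  then have "t * u0 (inverse t) * (u1 (inverse t) - u1' (inverse t) / t)
      - (u0 (inverse t) - u0' (inverse t) / t) * (t * u1 (inverse t)) \<noteq> 0"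
    if "t \<in> lower_half_disc 1" for t
    using W[OF inverted[OF that]] that by simp
  then obtain N p0 p1 where p: "(p0, p1) \<noteq> (0, 0)"
    and lim: "((\<lambda>t. t * u0 (inverse t) / N t) \<longlongrightarrow> p0) (at 0 within lower_half_disc 1)"
    "((\<lambda>t. t * u1 (inverse t) / N t) \<longlongrightarrow> p1) (at 0 within lower_half_disc 1)"
    "((\<lambda>t. t * (u0 (inverse t) - u0' (inverse t) / t) / N t) \<longlongrightarrow> of_real ((1 - \<bar>\<mu>\<bar>) / 2) * p0)
       (at 0 within lower_half_disc 1)"
    "((\<lambda>t. t * (u1 (inverse t) - u1' (inverse t) / t) / N t) \<longlongrightarrow> of_real ((1 - \<bar>\<mu>\<bar>) / 2) * p1)
       (at 0 within lower_half_disc 1)"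
    by (rule regular_singular_point_limits[OF A S v[OF u(1)] v[OF u(2)]])
  have "(1 - \<bar>\<mu>\<bar>) / 2 \<noteq> 1"
    by (simp add: field_simps)
  then have "of_real ((1 - \<bar>\<mu>\<bar>) / 2) \<noteq> (1 :: complex)"
    by (metis of_real_eq_1_iff)
  from P1_limits_at_inversion[OF this p lim] show ?thesis
    by blast
qed

section \<open>The hypergeometric potential\<close>

definition qpot_numerator :: "real \<Rightarrow> real \<Rightarrow> real \<Rightarrow> complex \<Rightarrow> complex" where
  "qpot_numerator a b c x =
     (1 - complex_of_real ((muinf a b c)\<^sup>2)) * x\<^sup>2
     + complex_of_real ((muinf a b c)\<^sup>2 + (mu0 a b c)\<^sup>2 - (mu1 a b c)\<^sup>2 - 1) * x
     + (1 - complex_of_real ((mu0 a b c)\<^sup>2))"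

lemma qpot_eq: "qpot a b c x = - (1 / 4) * qpot_numerator a b c x / (x\<^sup>2 * (1 - x)\<^sup>2)"
  by (simp add: qpot_def qpot_numerator_def)

lemma qpot_numerator_at_1: "qpot_numerator a b c 1 = of_real (1 - (mu1 a b c)\<^sup>2)"
  by (simp add: qpot_numerator_def)

lemma hypergeometric_limits_at_0:
  assumes "open U" "Xplus \<subseteq> U" "ode_solution (qpot a b c) U u0 u0'" "ode_solution (qpot a b c) U u1 u1'"
    and "\<And>x. x \<in> Xplus \<Longrightarrow> u0 x * u1' x - u0' x * u1 x \<noteq> 0" and "\<bar>1 - c\<bar> < 1"
  shows "\<exists>p. P1_tendsto (\<lambda>x. (u0 x, u1 x)) p (at 0 within Xplus)
          \<and> P1_tendsto (\<lambda>x. (u0' x, u1' x)) p (at 0 within Xplus)"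
proof (rule finite_singular_point_limits[OF _ assms(1-5),
      where A = "\<lambda>t. - (1 / 4) * qpot_numerator a b c (- t) / (1 + t)\<^sup>2" and \<mu> = "mu0 a b c"])
  have "1 + t \<noteq> 0" if "t \<in> ball 0 1" for t :: complex
    using that by (auto simp: add_eq_0_iff)
  then show "(\<lambda>t. - (1 / 4) * qpot_numerator a b c (- t) / (1 + t)\<^sup>2) holomorphic_on ball 0 1"
    unfolding qpot_numerator_def by (intro holomorphic_intros) auto
  show "qpot a b c (0 - t) = - (1 / 4) * qpot_numerator a b c (- t) / (1 + t)\<^sup>2 / t\<^sup>2" for t
    by (simp add: qpot_eq)
qed (use assms(6) in \<open>simp_all add: qpot_numerator_def mu0_def\<close>)

lemma hypergeometric_limits_at_1:
  assumes "open U" "Xplus \<subseteq> U" "ode_solution (qpot a b c) U u0 u0'" "ode_solution (qpot a b c) U u1 u1'"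
    and "\<And>x. x \<in> Xplus \<Longrightarrow> u0 x * u1' x - u0' x * u1 x \<noteq> 0" and "\<bar>c - a - b\<bar> < 1"
  shows "\<exists>p. P1_tendsto (\<lambda>x. (u0 x, u1 x)) p (at 1 within Xplus)
          \<and> P1_tendsto (\<lambda>x. (u0' x, u1' x)) p (at 1 within Xplus)"
proof (rule finite_singular_point_limits[OF _ assms(1-5),
      where A = "\<lambda>t. - (1 / 4) * qpot_numerator a b c (1 - t) / (1 - t)\<^sup>2" and \<mu> = "mu1 a b c"])
  have "1 - t \<noteq> 0" if "t \<in> ball 0 1" for t :: complex
    using that by auto
  then show "(\<lambda>t. - (1 / 4) * qpot_numerator a b c (1 - t) / (1 - t)\<^sup>2) holomorphic_on ball 0 1"
    unfolding qpot_numerator_def by (intro holomorphic_intros) auto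
  show "qpot a b c (1 - t) = - (1 / 4) * qpot_numerator a b c (1 - t) / (1 - t)\<^sup>2 / t\<^sup>2" for t
    by (simp add: qpot_eq mult.commute)
qed (use assms(6) in \<open>simp_all add: qpot_numerator_at_1 mu1_def\<close>)

lemma quadratic_at_inverse:
  fixes P B C t :: complex
  assumes t: "t \<noteq> 0" "t \<noteq> 1"
  shows "(P * (inverse t)\<^sup>2 + B * inverse t + C) / ((inverse t)\<^sup>2 * (1 - inverse t)\<^sup>2)
       = (P + B * t + C * t\<^sup>2) / (t - 1)\<^sup>2 * t\<^sup>2"
proof -
  have "P * (inverse t)\<^sup>2 + B * inverse t + C = (P + B * t + C * t\<^sup>2) / (t * t)"
    using t by (simp add: field_simps power2_eq_square)
  moreover have "(inverse t)\<^sup>2 * (1 - inverse t)\<^sup>2 = (t - 1)\<^sup>2 / ((t * t) * (t * t))"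
    using t by (simp add: field_simps power2_eq_square)
  moreover have "(X / T) / (D / (T * T)) = X / D * T" if "T \<noteq> 0" "D \<noteq> 0" for X T D :: complex
    using that by (simp add: field_simps)
  ultimately show ?thesis
    using t by (simp add: power2_eq_square)
qed

lemma hypergeometric_limits_at_infinity:
  assumes "open U" "Xplus \<subseteq> U" "ode_solution (qpot a b c) U u0 u0'" "ode_solution (qpot a b c) U u1 u1'"
    and "\<And>x. x \<in> Xplus \<Longrightarrow> u0 x * u1' x - u0' x * u1 x \<noteq> 0" and "\<bar>b - a\<bar> < 1"
  shows "\<exists>p. P1_tendsto (\<lambda>x. (u0 x, u1 x)) p (inf at_infinity (principal Xplus))
          \<and> P1_tendsto (\<lambda>x. (u0' x, u1' x)) p (inf at_infinity (principal Xplus))"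
proof -
  text \<open>The numerator of qpot with reversed coefficients, divided by (t - 1)^2.\<close>
  define A where "A = (\<lambda>t. - (1 / 4) * ((1 - complex_of_real ((muinf a b c)\<^sup>2))
      + complex_of_real ((muinf a b c)\<^sup>2 + (mu0 a b c)\<^sup>2 - (mu1 a b c)\<^sup>2 - 1) * t
      + (1 - complex_of_real ((mu0 a b c)\<^sup>2)) * t\<^sup>2) / (t - 1)\<^sup>2)"
  show ?thesis
  proof (rule infinite_singular_point_limits[OF assms(1-5), where A = A and \<mu> = "muinf a b c"])
    have "t - 1 \<noteq> 0" if "t \<in> ball 0 1" for t :: complex
      using that by auto
    then show "A holomorphic_on ball 0 1"
      unfolding A_def by (intro holomorphic_intros) auto
    show "A 0 = - of_real ((1 - (muinf a b c)\<^sup>2) / 4)"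
      by (simp add: A_def)
    show "\<bar>muinf a b c\<bar> < 1"
      using assms(6) by (simp add: muinf_def)
    fix t :: complex assume "t \<in> ball 0 1 - {0}"
    then have t: "t \<noteq> 0" "t \<noteq> 1"
      by auto
    have "qpot a b c (inverse t)
        = - (1 / 4) * (qpot_numerator a b c (inverse t) / ((inverse t)\<^sup>2 * (1 - inverse t)\<^sup>2))"
      unfolding qpot_eq by simp
    also have "qpot_numerator a b c (inverse t) / ((inverse t)\<^sup>2 * (1 - inverse t)\<^sup>2)
        = ((1 - complex_of_real ((muinf a b c)\<^sup>2))
           + complex_of_real ((muinf a b c)\<^sup>2 + (mu0 a b c)\<^sup>2 - (mu1 a b c)\<^sup>2 - 1) * t
           + (1 - complex_of_real ((mu0 a b c)\<^sup>2)) * t\<^sup>2) / (t - 1)\<^sup>2 * t\<^sup>2"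
      unfolding qpot_numerator_def by (rule quadratic_at_inverse[OF t])
    finally have "qpot a b c (inverse t) = A t * t\<^sup>2"
      by (simp add: A_def)
    then show "qpot a b c (inverse t) / t ^ 4 = A t / t\<^sup>2"
      using t by (simp add: field_simps power2_eq_square power4_eq_xxxx)
  qed
qed

lemma sl_solutions_common_domain:
  assumes "sl_solution a b c u0" "sl_solution a b c u1"
  obtains U where "open U" "Xplus \<subseteq> U"
    "ode_solution (qpot a b c) U u0 (deriv u0)" "ode_solution (qpot a b c) U u1 (deriv u1)"
proof -
  obtain U0 where U0: "open U0" "Xplus \<subseteq> U0" "u0 holomorphic_on U0"
      "\<forall>x\<in>U0. deriv (deriv u0) x - qpot a b c x * u0 x = 0"
    using assms(1) unfolding sl_solution_def by blast
  obtain U1 where U1: "open U1" "Xplus \<subseteq> U1" "u1 holomorphic_on U1"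
      "\<forall>x\<in>U1. deriv (deriv u1) x - qpot a b c x * u1 x = 0"
    using assms(2) unfolding sl_solution_def by blast
  show ?thesis
  proof (rule that[of "U0 \<inter> U1"])
    show "open (U0 \<inter> U1)" "Xplus \<subseteq> U0 \<inter> U1"
      using U0 U1 by auto
    show "ode_solution (qpot a b c) (U0 \<inter> U1) u0 (deriv u0)" "ode_solution (qpot a b c) (U0 \<inter> U1) u1 (deriv u1)"
      using U0 U1 by (auto intro!: ode_solution_of_holomorphic)
  qed
qed

theorem lemma2p1:
  fixes a b c :: real and u0 u1 :: "complex \<Rightarrow> complex"
  assumes "\<bar>1 - c\<bar> < 1" and "\<bar>c - a - b\<bar> < 1" and "\<bar>b - a\<bar> < 1"
    and "sl_solution a b c u0" and "sl_solution a b c u1"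
    and "\<forall>k0 k1. (\<forall>x\<in>Xplus. k0 * u0 x + k1 * u1 x = 0) \<longrightarrow> k0 = 0 \<and> k1 = 0"
  shows "(\<exists>p. P1_tendsto (\<lambda>x. (u0 x, u1 x)) p (at 0 within Xplus)
              \<and> P1_tendsto (\<lambda>x. (deriv u0 x, deriv u1 x)) p (at 0 within Xplus))
       \<and> (\<exists>p. P1_tendsto (\<lambda>x. (u0 x, u1 x)) p (at 1 within Xplus)
              \<and> P1_tendsto (\<lambda>x. (deriv u0 x, deriv u1 x)) p (at 1 within Xplus))
       \<and> (\<exists>p. P1_tendsto (\<lambda>x. (u0 x, u1 x)) p (inf at_infinity (principal Xplus))
              \<and> P1_tendsto (\<lambda>x. (deriv u0 x, deriv u1 x)) p (inf at_infinity (principal Xplus)))"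
proof -
  obtain U where U: "open U" "Xplus \<subseteq> U"
    and u: "ode_solution (qpot a b c) U u0 (deriv u0)" "ode_solution (qpot a b c) U u1 (deriv u1)"
    using sl_solutions_common_domain[OF assms(4,5)] by blast
  have W: "\<And>x. x \<in> Xplus \<Longrightarrow> u0 x * deriv u1 x - deriv u0 x * u1 x \<noteq> 0"
    using wronskian_nonzero_on_Xplus[OF U u assms(6)] .
  show ?thesis
    using hypergeometric_limits_at_0[OF U u W assms(1)] hypergeometric_limits_at_1[OF U u W assms(2)]
      hypergeometric_limits_at_infinity[OF U u W assms(3)] by blast
qed

end
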